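(* Let $G$ be a finite simple graph on $n\ge1$ vertices. Then there is exactly one pair of nonnegative integers $(k,m)$ with $2k+m=n$ such that $G(k,m)$ lies in the same Clifford class as $G$, i.e. $\dim_{\mathbb{C}} Z(A_{G(k,m)})=\dim_{\mathbb{C}} Z(A_G)$.
   Context: All graphs are finite, with no loops and no multiple edges. For a graph $G$ with vertices numbered $1,\dots,n$, the Clifford graph algebra $A_G$ is the unital associative $\mathbb{C}$-algebra generated by $e_1,\dots,e_n$ subject to the relations $e_i^2=-1$ for all $i$; $e_ie_j=-e_je_i$ if $i\neq j$ and vertices $i,j$ are adjacent; and $e_ie_j=e_je_i$ if $i\ne j$ and vertices $i,j$ are not adjacent. $Z(A)$ denotes the center. Two graphs with the same number of vertices are in the same Clifford class if the centers of their Clifford graph algebras have the same dimension. For nonnegative integers $k,m$, $G(k,m)$ denotes the graph on $2k+m$ vertices that is the disjoint union of $k$ copies of $K_2$ (a single edge) and $m$ isolated vertices. *)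

theory Defs
  imports Complex_Main
begin

text \<open>A finite simple graph on vertices 1..n is given by a symmetric, irreflexive
adjacency relation E (its values outside {1..n} are irrelevant).\<close>

definition simple_graph :: "nat \<Rightarrow> (nat \<Rightarrow> nat \<Rightarrow> bool) \<Rightarrow> bool" where
  "simple_graph n E \<longleftrightarrow>
     (\<forall>i\<in>{1..n}. \<forall>j\<in>{1..n}. E i j \<longleftrightarrow> E j i) \<and> (\<forall>i\<in>{1..n}. \<not> E i i)"

text \<open>G(k,m): vertices 1..2k+m, edges {2i-1,2i} for i = 1..k (k disjoint copies of K2),
vertices 2k+1..2k+m isolated.\<close>

definition Gkm_edges :: "nat \<Rightarrow> nat \<Rightarrow> nat \<Rightarrow> bool" where
  "Gkm_edges k i j \<longleftrightarrow> i \<noteq> j \<and> 1 \<le> i \<and> 1 \<le> j \<and> i \<le> 2*k \<and> j \<le> 2*k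
                       \<and> (i + 1) div 2 = (j + 1) div 2"

text \<open>Elements of the free unital associative C-algebra on e_1,...,e_n: finitely supported
complex-valued functions on words over the alphabet {1..n}; multiplication is concatenation
convolution.\<close>

definition free_alg :: "nat \<Rightarrow> (nat list \<Rightarrow> complex) set" where
  "free_alg n = {p. finite {w. p w \<noteq> 0} \<and> (\<forall>w. p w \<noteq> 0 \<longrightarrow> set w \<subseteq> {1..n})}"

definition fa_add :: "(nat list \<Rightarrow> complex) \<Rightarrow> (nat list \<Rightarrow> complex) \<Rightarrow> (nat list \<Rightarrow> complex)" where
  "fa_add p q = (\<lambda>w. p w + q w)"

definition fa_sub :: "(nat list \<Rightarrow> complex) \<Rightarrow> (nat list \<Rightarrow> complex) \<Rightarrow> (nat list \<Rightarrow> complex)" where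
  "fa_sub p q = (\<lambda>w. p w - q w)"

definition fa_smult :: "complex \<Rightarrow> (nat list \<Rightarrow> complex) \<Rightarrow> (nat list \<Rightarrow> complex)" where
  "fa_smult c p = (\<lambda>w. c * p w)"

definition fa_mult :: "(nat list \<Rightarrow> complex) \<Rightarrow> (nat list \<Rightarrow> complex) \<Rightarrow> (nat list \<Rightarrow> complex)" where
  "fa_mult p q = (\<lambda>w. \<Sum>i\<le>length w. p (take i w) * q (drop i w))"

definition fa_one :: "nat list \<Rightarrow> complex" where
  "fa_one = (\<lambda>w. if w = [] then 1 else 0)"

definition fa_zero :: "nat list \<Rightarrow> complex" where
  "fa_zero = (\<lambda>w. 0)"

definition fa_gen :: "nat \<Rightarrow> nat list \<Rightarrow> complex" where
  "fa_gen i = (\<lambda>w. if w = [i] then 1 else 0)"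

definition clifford_relations :: "nat \<Rightarrow> (nat \<Rightarrow> nat \<Rightarrow> bool) \<Rightarrow> (nat list \<Rightarrow> complex) set" where
  "clifford_relations n E =
     {fa_add (fa_mult (fa_gen i) (fa_gen i)) fa_one | i. i \<in> {1..n}}
   \<union> {fa_add (fa_mult (fa_gen i) (fa_gen j)) (fa_mult (fa_gen j) (fa_gen i)) | i j.
        i \<in> {1..n} \<and> j \<in> {1..n} \<and> i \<noteq> j \<and> E i j}
   \<union> {fa_sub (fa_mult (fa_gen i) (fa_gen j)) (fa_mult (fa_gen j) (fa_gen i)) | i j.
        i \<in> {1..n} \<and> j \<in> {1..n} \<and> i \<noteq> j \<and> \<not> E i j}"

inductive_set clifford_ideal :: "nat \<Rightarrow> (nat \<Rightarrow> nat \<Rightarrow> bool) \<Rightarrow> (nat list \<Rightarrow> complex) set"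
  for n E where
  rel: "r \<in> clifford_relations n E \<Longrightarrow> r \<in> clifford_ideal n E"
| zero: "fa_zero \<in> clifford_ideal n E"
| add: "x \<in> clifford_ideal n E \<Longrightarrow> y \<in> clifford_ideal n E \<Longrightarrow> fa_add x y \<in> clifford_ideal n E"
| smult: "x \<in> clifford_ideal n E \<Longrightarrow> fa_smult c x \<in> clifford_ideal n E"
| lmult: "a \<in> free_alg n \<Longrightarrow> x \<in> clifford_ideal n E \<Longrightarrow> fa_mult a x \<in> clifford_ideal n E"
| rmult: "a \<in> free_alg n \<Longrightarrow> x \<in> clifford_ideal n E \<Longrightarrow> fa_mult x a \<in> clifford_ideal n E"

text \<open>Preimage in the free algebra of the center Z(A_G): elements commuting with
everything modulo the ideal.\<close>

definition center_preimage :: "nat \<Rightarrow> (nat \<Rightarrow> nat \<Rightarrow> bool) \<Rightarrow> (nat list \<Rightarrow> complex) set" where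
  "center_preimage n E =
     {p \<in> free_alg n. \<forall>q \<in> free_alg n. fa_sub (fa_mult p q) (fa_mult q p) \<in> clifford_ideal n E}"

definition lincomb :: "((nat list \<Rightarrow> complex) \<Rightarrow> complex) \<Rightarrow> (nat list \<Rightarrow> complex) set \<Rightarrow> (nat list \<Rightarrow> complex)" where
  "lincomb c B = (\<lambda>w. \<Sum>b\<in>B. c b * b w)"

text \<open>B (a finite subset of the center preimage) projects to a basis of Z(A_G) =
center_preimage / ideal.\<close>

definition center_basis :: "nat \<Rightarrow> (nat \<Rightarrow> nat \<Rightarrow> bool) \<Rightarrow> (nat list \<Rightarrow> complex) set \<Rightarrow> bool" where
  "center_basis n E B \<longleftrightarrow>
     finite B \<and> B \<subseteq> center_preimage n E \<and>
     (\<forall>c. lincomb c B \<in> clifford_ideal n E \<longrightarrow> (\<forall>b\<in>B. c b = 0)) \<and>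
     (\<forall>p \<in> center_preimage n E. \<exists>c. fa_sub p (lincomb c B) \<in> clifford_ideal n E)"

definition center_dim :: "nat \<Rightarrow> (nat \<Rightarrow> nat \<Rightarrow> bool) \<Rightarrow> nat" where
  "center_dim n E = (THE d. \<exists>B. center_basis n E B \<and> card B = d)"

definition same_clifford_class :: "nat \<Rightarrow> (nat \<Rightarrow> nat \<Rightarrow> bool) \<Rightarrow> (nat \<Rightarrow> nat \<Rightarrow> bool) \<Rightarrow> bool" where
  "same_clifford_class n E E' \<longleftrightarrow> center_dim n E = center_dim n E'"

end

theory Submission
  imports Defs "HOL-Library.Function_Algebras"
begin

(* Write e_T for the product of the generators e_t, t in T, taken in increasing
   order.  Every word in the generators reduces, modulo the Clifford relations, to plus or minus
   e_T where T is the set of letters occurring an odd number of times; so the e_T with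
   T a subset of {1..n} span A_G, and the coordinate functionals "coefficient of e_T" are
   well defined on A_G (they vanish on the relation ideal).  Since e_i e_T = (+-) e_T e_i with
   sign given by the parity of the number of neighbours of i in T, the centre Z(A_G) has basis
   { e_T | T in K } where K is the kernel, over GF(2), of the adjacency matrix of G.

   For G(k,m) the kernel consists of the subsets of the m isolated vertices, so its centre
   has dimension 2^m, and the main theorem follows: (k,m) = (r, n-2r) is the unique
   admissible pair. *)

text \<open>\<open>parity S P\<close>: the number of elements of \<open>S\<close> satisfying \<open>P\<close> is odd.  All sign
  computations in Clifford algebras reduce to such parities.\<close>

definition parity :: "nat set \<Rightarrow> (nat \<Rightarrow> bool) \<Rightarrow> bool" where
  "parity S P = odd (card {t\<in>S. P t})"

lemma parity_empty[simp]: "parity {} P = False" by (simp add: parity_def)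

lemma parity_insert: "finite S \<Longrightarrow> x \<notin> S \<Longrightarrow> parity (insert x S) P = (P x \<noteq> parity S P)"
proof -
  assume f: "finite S" and x: "x \<notin> S"
  show ?thesis
  proof (cases "P x")
    case True
    then have "{t\<in>insert x S. P t} = insert x {t\<in>S. P t}" by auto
    then show ?thesis using f x True by (simp add: parity_def)
  next
    case False
    then have "{t\<in>insert x S. P t} = {t\<in>S. P t}" by auto
    then show ?thesis using False by (simp add: parity_def)
  qed
qed

lemma parity_cong: "(\<And>t. t \<in> S \<Longrightarrow> P t = Q t) \<Longrightarrow> parity S P = parity S Q"
  unfolding parity_def by (metis (mono_tags, lifting) Collect_cong)

lemma parity_xor: "finite S \<Longrightarrow> parity S (\<lambda>t. P t \<noteq> Q t) = (parity S P \<noteq> parity S Q)"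
  by (induction S rule: finite_induct) (auto simp: parity_insert)

lemma parity_and_const: "parity S (\<lambda>t. A \<and> Q t) = (A \<and> parity S Q)"
  unfolding parity_def by (cases A) auto

lemma parity_false: "(\<And>t. t \<in> S \<Longrightarrow> \<not> P t) \<Longrightarrow> parity S P = False"
  unfolding parity_def by (metis (mono_tags, lifting) card.empty empty_Collect_eq even_zero)

lemma parity_union:
  "finite A \<Longrightarrow> finite B \<Longrightarrow> A \<inter> B = {} \<Longrightarrow> parity (A \<union> B) P = (parity A P \<noteq> parity B P)"
  by (induction A rule: finite_induct) (auto simp: parity_insert)

text \<open>Symmetric difference, i.e.\ addition of subsets viewed as GF(2)-vectors.  It is the
  library's \<open>sym_diff\<close>, wrapped in a definition so that the simplifier treats it as an atom.\<close>

definition symdiff :: "nat set \<Rightarrow> nat set \<Rightarrow> nat set" where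
  "symdiff A B = sym_diff A B"

lemma symdiff_symdiff[simp]: "symdiff (symdiff A B) B = A" by (auto simp: symdiff_def)
lemma symdiff_comm: "symdiff A B = symdiff B A" by (auto simp: symdiff_def)
lemma symdiff_eq_iff: "(symdiff S X = T) = (S = symdiff T X)" by (auto simp: symdiff_def)
lemma symdiff_empty[simp]: "symdiff A {} = A" "symdiff {} A = A" by (auto simp: symdiff_def)
lemma finite_symdiff[simp]: "finite A \<Longrightarrow> finite B \<Longrightarrow> finite (symdiff A B)"
  by (simp add: symdiff_def)

lemma parity_symdiff_singleton:
  assumes f: "finite S"
  shows "parity (symdiff S {j}) P = (parity S P \<noteq> P j)"
proof (cases "j \<in> S")
  case True
  have "symdiff S {j} = S - {j}" using True by (auto simp: symdiff_def)
  moreover have "parity S P = (P j \<noteq> parity (S - {j}) P)"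
    using parity_insert[of "S - {j}" j P] f True by (simp add: insert_absorb)
  ultimately show ?thesis by auto
next
  case False
  have "symdiff S {j} = insert j S" using False by (auto simp: symdiff_def)
  then show ?thesis using parity_insert[of S j P] f False by auto
qed

section \<open>The GF(2)-kernel of the adjacency matrix\<close>

text \<open>\<open>adj_kernel V E\<close>: the subsets \<open>T \<subseteq> V\<close> in which every vertex of \<open>V\<close> has an even
  number of neighbours, i.e.\ the kernel of the adjacency matrix of \<open>(V, E)\<close> over GF(2).\<close>

definition adj_kernel :: "nat set \<Rightarrow> (nat \<Rightarrow> nat \<Rightarrow> bool) \<Rightarrow> nat set set" where
  "adj_kernel V E = {T. T \<subseteq> V \<and> (\<forall>i\<in>V. \<not> parity T (E i))}"

definition sym_irrefl_on :: "nat set \<Rightarrow> (nat \<Rightarrow> nat \<Rightarrow> bool) \<Rightarrow> bool" where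
  "sym_irrefl_on V E \<longleftrightarrow> (\<forall>i\<in>V. \<forall>j\<in>V. E i j = E j i) \<and> (\<forall>i\<in>V. \<not> E i i)"

lemma adj_kernel_no_edges:
  assumes "\<forall>a\<in>V. \<forall>b\<in>V. \<not> E a b"
  shows "adj_kernel V E = Pow V"
  using assms unfolding adj_kernel_def by (auto; meson parity_false subsetD)

text \<open>Pivoting on an edge \<open>ab\<close>: the graph on \<open>V - {a,b}\<close> obtained by symmetric Gaussian
  elimination of the rows and columns \<open>a\<close>, \<open>b\<close> of the adjacency matrix.\<close>

definition pivot :: "(nat \<Rightarrow> nat \<Rightarrow> bool) \<Rightarrow> nat \<Rightarrow> nat \<Rightarrow> nat \<Rightarrow> nat \<Rightarrow> bool" where
  "pivot E a b x t = (E x t \<noteq> ((E x a \<and> E b t) \<noteq> (E x b \<and> E a t)))"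

lemma sym_irrefl_on_pivot:
  assumes "sym_irrefl_on V E" "a \<in> V" "b \<in> V"
  shows "sym_irrefl_on (V - {a, b}) (pivot E a b)"
proof -
  have sym: "\<And>i j. i \<in> V \<Longrightarrow> j \<in> V \<Longrightarrow> E i j = E j i"
    and irr: "\<And>i. i \<in> V \<Longrightarrow> \<not> E i i" using assms(1) by (auto simp: sym_irrefl_on_def)
  show ?thesis unfolding sym_irrefl_on_def pivot_def
  proof (intro conjI ballI)
    fix i j assume "i \<in> V - {a, b}" "j \<in> V - {a, b}"
    then show "(E i j \<noteq> ((E i a \<and> E b j) \<noteq> (E i b \<and> E a j))) =
               (E j i \<noteq> ((E j a \<and> E b i) \<noteq> (E j b \<and> E a i)))"
      using sym[of i j] sym[of i a] sym[of i b] sym[of j a] sym[of j b] assms(2,3) by auto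
  next
    fix i assume "i \<in> V - {a, b}"
    then show "\<not> (E i i \<noteq> ((E i a \<and> E b i) \<noteq> (E i b \<and> E a i)))"
      using irr[of i] sym[of i a] sym[of i b] assms(2,3) by auto
  qed
qed

lemma parity_pivot:
  assumes "finite X"
  shows "parity X (pivot E a b i) =
           (parity X (E i) \<noteq> ((E i a \<and> parity X (E b)) \<noteq> (E i b \<and> parity X (E a))))"
  unfolding pivot_def
  by (subst parity_xor[OF assms], subst parity_xor[OF assms], simp only: parity_and_const)

text \<open>A kernel vector of the pivoted graph extends uniquely to one of the original graph by
  adding \<open>b\<close> (resp.\ \<open>a\<close>) when it has an odd number of neighbours of \<open>a\<close> (resp.\ \<open>b\<close>).\<close>

definition pivot_lift :: "(nat \<Rightarrow> nat \<Rightarrow> bool) \<Rightarrow> nat \<Rightarrow> nat \<Rightarrow> nat set \<Rightarrow> nat set" where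
  "pivot_lift E a b T =
     T \<union> (if parity T (E a) then {b} else {}) \<union> (if parity T (E b) then {a} else {})"

lemma parity_pivot_lift:
  assumes f: "finite T" and ab: "a \<notin> T" "b \<notin> T" "a \<noteq> b"
  shows "parity (pivot_lift E a b T) P =
           ((parity T P \<noteq> (parity T (E a) \<and> P b)) \<noteq> (parity T (E b) \<and> P a))"
proof -
  let ?B = "(if parity T (E a) then {b} else {})" and ?A = "(if parity T (E b) then {a} else {})"
  have "pivot_lift E a b T = T \<union> (?B \<union> ?A)" by (simp add: pivot_lift_def Un_assoc)
  moreover have "parity (?B \<union> ?A) P = ((parity T (E a) \<and> P b) \<noteq> (parity T (E b) \<and> P a))"
    using ab by (auto simp: parity_insert)
  moreover have "parity (T \<union> (?B \<union> ?A)) P = (parity T P \<noteq> parity (?B \<union> ?A) P)"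
    using ab f by (intro parity_union) auto
  ultimately show ?thesis by auto
qed

lemma adj_kernel_is_pivot_lift:
  assumes fin: "finite V" and si: "sym_irrefl_on V E"
    and a: "a \<in> V" and b: "b \<in> V" and eab: "E a b" and Y: "Y \<in> adj_kernel V E"
  shows "Y - {a, b} \<in> adj_kernel (V - {a, b}) (pivot E a b)" and "Y = pivot_lift E a b (Y - {a, b})"
proof -
  have sym: "E a b = E b a" and irr: "\<not> E a a" "\<not> E b b"
    using si a b by (auto simp: sym_irrefl_on_def)
  have ab: "a \<noteq> b" using irr eab by auto
  define X where "X = Y - {a,b}"
  have YV: "Y \<subseteq> V" using Y by (auto simp: adj_kernel_def)
  have fX: "finite X" using YV fin finite_subset by (auto simp: X_def)
  have aX: "a \<notin> X" "b \<notin> X" by (auto simp: X_def)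
  have Yeq: "Y = X \<union> ((if b \<in> Y then {b} else {}) \<union> (if a \<in> Y then {a} else {}))"
    by (auto simp: X_def)
  have parity_Y: "parity Y P = ((parity X P \<noteq> (b \<in> Y \<and> P b)) \<noteq> (a \<in> Y \<and> P a))" for P
  proof -
    have "parity Y P = (parity X P \<noteq>
            parity ((if b \<in> Y then {b} else {}) \<union> (if a \<in> Y then {a} else {})) P)"
      by (subst Yeq, rule parity_union) (auto simp: fX aX)
    also have "parity ((if b \<in> Y then {b} else {}) \<union> (if a \<in> Y then {a} else {})) P
         = ((b \<in> Y \<and> P b) \<noteq> (a \<in> Y \<and> P a))"
      using ab by (auto simp: parity_insert)
    finally show ?thesis by argo
  qed
  have ka: "\<not> parity Y (E a)" and kb: "\<not> parity Y (E b)" using Y a b by (auto simp: adj_kernel_def)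
  have bY: "(b \<in> Y) = parity X (E a)"
    using ka parity_Y[of "E a"] irr eab by (cases "parity X (E a)"; cases "b \<in> Y"; cases "a \<in> Y"; simp)
  have aY: "(a \<in> Y) = parity X (E b)"
    using kb parity_Y[of "E b"] irr eab sym by (cases "parity X (E b)"; cases "b \<in> Y"; cases "a \<in> Y"; simp)
  have "Y = X \<union> ((if parity X (E a) then {b} else {}) \<union> (if parity X (E b) then {a} else {}))"
    using Yeq by (simp only: bY aY)
  then show "Y = pivot_lift E a b (Y - {a, b})" unfolding pivot_lift_def X_def by (simp add: Un_assoc)
  have "\<not> parity X (pivot E a b i)" if i: "i \<in> V - {a, b}" for i
  proof -
    have "\<not> parity Y (E i)" using Y i by (auto simp: adj_kernel_def)
    then show ?thesis using parity_Y[of "E i"] aY bY parity_pivot[OF fX, of E a b i]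
      by (cases "parity X (E i)"; cases "parity X (E a)"; cases "parity X (E b)";
          cases "E i a"; cases "E i b"; simp)
  qed
  then show "Y - {a, b} \<in> adj_kernel (V - {a, b}) (pivot E a b)"
    using YV by (auto simp: adj_kernel_def X_def)
qed

lemma pivot_lift_bij:
  assumes fin: "finite V" and si: "sym_irrefl_on V E"
    and a: "a \<in> V" and b: "b \<in> V" and eab: "E a b"
  shows "bij_betw (pivot_lift E a b) (adj_kernel (V - {a, b}) (pivot E a b)) (adj_kernel V E)"
proof (rule bij_betwI')
  fix X Y assume X: "X \<in> adj_kernel (V - {a, b}) (pivot E a b)"
    and Y: "Y \<in> adj_kernel (V - {a, b}) (pivot E a b)"
  have "X \<subseteq> V - {a, b}" "Y \<subseteq> V - {a, b}" using X Y by (auto simp: adj_kernel_def)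
  then have "pivot_lift E a b X - {a,b} = X" "pivot_lift E a b Y - {a,b} = Y"
    by (auto simp: pivot_lift_def)
  then show "(pivot_lift E a b X = pivot_lift E a b Y) = (X = Y)" by metis
next
  have sym: "E i a = E a i" "E i b = E b i" if "i \<in> V" for i
    using si a b that by (auto simp: sym_irrefl_on_def)
  have irr: "\<not> E a a" "\<not> E b b" using si a b by (auto simp: sym_irrefl_on_def)
  have ab: "a \<noteq> b" using irr eab by auto
  fix X assume X: "X \<in> adj_kernel (V - {a, b}) (pivot E a b)"
  have XV: "X \<subseteq> V - {a, b}" using X by (auto simp: adj_kernel_def)
  have fX: "finite X" using XV fin finite_subset by blast
  have aX: "a \<notin> X" "b \<notin> X" using XV by auto
  have "\<not> parity (pivot_lift E a b X) (E i)" if i: "i \<in> V" for i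
  proof -
    have eq: "parity (pivot_lift E a b X) (E i) =
        ((parity X (E i) \<noteq> (parity X (E a) \<and> E i b)) \<noteq> (parity X (E b) \<and> E i a))"
      by (rule parity_pivot_lift[OF fX aX ab])
    show ?thesis
    proof (cases "i = a \<or> i = b")
      case True
      then show ?thesis
      proof
        assume "i = a"
        then show ?thesis using eq irr(1) eab by simp
      next
        assume "i = b"
        then show ?thesis using eq irr(2) eab sym(1)[OF b] by simp
      qed
    next
      case False
      then have "i \<in> V - {a, b}" using i by auto
      then have "\<not> parity X (pivot E a b i)" using X by (auto simp: adj_kernel_def)
      then show ?thesis using eq parity_pivot[OF fX, of E a b i]
        by (cases "parity X (E i)"; cases "parity X (E a)"; cases "parity X (E b)";
            cases "E i a"; cases "E i b"; simp)
    qed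
  qed
  moreover have "pivot_lift E a b X \<subseteq> V" using XV a b by (auto simp: pivot_lift_def)
  ultimately show "pivot_lift E a b X \<in> adj_kernel V E" by (auto simp: adj_kernel_def)
next
  fix Y assume "Y \<in> adj_kernel V E"
  then show "\<exists>X\<in>adj_kernel (V - {a, b}) (pivot E a b). Y = pivot_lift E a b X"
    using adj_kernel_is_pivot_lift[OF assms] by blast
qed

text \<open>The kernel of a symmetric GF(2)-matrix with zero diagonal has codimension \<open>2r\<close>:
  its rank is even.  Induction on \<open>|V|\<close>, pivoting on an edge while there is one.\<close>

lemma card_adj_kernel:
  assumes "finite V" "sym_irrefl_on V E"
  shows "\<exists>r. 2 * r \<le> card V \<and> card (adj_kernel V E) = 2 ^ (card V - 2 * r)"
  using assms
proof (induction "card V" arbitrary: V E rule: less_induct)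
  case less
  show ?case
  proof (cases "\<exists>a\<in>V. \<exists>b\<in>V. E a b")
    case False
    then have "card (adj_kernel V E) = 2 ^ card V"
      using less.prems(1) by (simp add: adj_kernel_no_edges card_Pow)
    then show ?thesis by (intro exI[of _ 0]) simp
  next
    case True
    then obtain a b where a: "a \<in> V" and b: "b \<in> V" and eab: "E a b" by blast
    have ab: "a \<noteq> b" using less.prems(2) a eab by (auto simp: sym_irrefl_on_def)
    define V' where "V' = V - {a, b}"
    have "card {a, b} \<le> card V" using a b less.prems(1) by (intro card_mono) auto
    then have cV2: "2 \<le> card V" using ab by simp
    have cV': "card V' = card V - 2" using a b ab less.prems(1) by (simp add: V'_def)
    have "card V' < card V" "finite V'" using cV' cV2 less.prems(1) by (auto simp: V'_def)
    moreover have "sym_irrefl_on V' (pivot E a b)"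
      unfolding V'_def using sym_irrefl_on_pivot[OF less.prems(2) a b] .
    ultimately obtain r where r: "2 * r \<le> card V'"
      "card (adj_kernel V' (pivot E a b)) = 2 ^ (card V' - 2 * r)"
      using less.hyps by blast
    have "card (adj_kernel V E) = card (adj_kernel V' (pivot E a b))"
      using bij_betw_same_card[OF pivot_lift_bij[OF less.prems a b eab]] by (simp add: V'_def)
    then show ?thesis using r cV' cV2 by (intro exI[of _ "Suc r"]) auto
  qed
qed

section \<open>The free algebra\<close>

definition supp :: "(nat list \<Rightarrow> complex) \<Rightarrow> nat list set" where
  "supp p = {w. p w \<noteq> 0}"

definition mon :: "nat list \<Rightarrow> nat list \<Rightarrow> complex" where
  "mon l = (\<lambda>w. if w = l then 1 else 0)"

lemma supp_add: "supp (fa_add x y) \<subseteq> supp x \<union> supp y" by (auto simp: supp_def fa_add_def)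
lemma supp_sub: "supp (fa_sub x y) \<subseteq> supp x \<union> supp y" by (auto simp: supp_def fa_sub_def)
lemma supp_smult: "supp (fa_smult c x) \<subseteq> supp x" by (auto simp: supp_def fa_smult_def)
lemma supp_mon: "supp (mon w) = {w}" by (auto simp: supp_def mon_def)
lemma finite_supp_mon: "finite (supp (mon w))" by (simp add: supp_mon)

lemma supp_mult: "supp (fa_mult p q) \<subseteq> (\<lambda>x. fst x @ snd x) ` (supp p \<times> supp q)"
proof
  fix w assume "w \<in> supp (fa_mult p q)"
  then have "(\<Sum>i\<le>length w. p (take i w) * q (drop i w)) \<noteq> 0"
    by (simp add: supp_def fa_mult_def)
  then obtain i where "p (take i w) * q (drop i w) \<noteq> 0"
    by (meson sum.not_neutral_contains_not_neutral)
  then show "w \<in> (\<lambda>x. fst x @ snd x) ` (supp p \<times> supp q)"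
    by (intro image_eqI[of _ _ "(take i w, drop i w)"]) (auto simp: supp_def)
qed

lemma finite_supp_mult: "finite (supp p) \<Longrightarrow> finite (supp q) \<Longrightarrow> finite (supp (fa_mult p q))"
proof -
  assume "finite (supp p)" "finite (supp q)"
  then have "finite ((\<lambda>x. fst x @ snd x) ` (supp p \<times> supp q))" by simp
  then show ?thesis using supp_mult finite_subset by blast
qed

lemma mult_split:
  assumes U: "finite U" "supp p \<subseteq> U" and V: "finite V" "supp q \<subseteq> V"
  shows "fa_mult p q w = (\<Sum>x\<in>{x\<in>U \<times> V. fst x @ snd x = w}. p (fst x) * q (snd x))"
proof -
  let ?f = "\<lambda>i. (take i w, drop i w)"
  have inj: "inj_on ?f {..length w}"
  proof (rule inj_onI)
    fix i j assume "i \<in> {..length w}" "j \<in> {..length w}" "?f i = ?f j"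
    then show "i = j" by (metis atMost_iff length_take min.absorb2 prod.inject)
  qed
  have img: "?f ` {..length w} = {x. fst x @ snd x = w}"
  proof
    show "?f ` {..length w} \<subseteq> {x. fst x @ snd x = w}" by auto
    show "{x. fst x @ snd x = w} \<subseteq> ?f ` {..length w}"
    proof
      fix x :: "nat list \<times> nat list" assume "x \<in> {x. fst x @ snd x = w}"
      then have "fst x @ snd x = w" by simp
      then show "x \<in> ?f ` {..length w}"
        by (intro image_eqI[of _ _ "length (fst x)"]) auto
    qed
  qed
  have fin: "finite {x::nat list \<times> nat list. fst x @ snd x = w}"
    using img by (metis finite_atMost finite_imageI)
  have "fa_mult p q w = (\<Sum>x\<in>?f ` {..length w}. p (fst x) * q (snd x))"
    unfolding fa_mult_def by (subst sum.reindex[OF inj]) simp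
  also have "\<dots> = (\<Sum>x\<in>{x. fst x @ snd x = w}. p (fst x) * q (snd x))" by (simp add: img)
  also have "\<dots> = (\<Sum>x\<in>{x\<in>U \<times> V. fst x @ snd x = w}. p (fst x) * q (snd x))"
  proof (rule sum.mono_neutral_right[OF fin])
    show "{x \<in> U \<times> V. fst x @ snd x = w} \<subseteq> {x. fst x @ snd x = w}" by auto
    show "\<forall>i\<in>{x. fst x @ snd x = w} - {x \<in> U \<times> V. fst x @ snd x = w}. p (fst i) * q (snd i) = 0"
      using U V by (auto simp: supp_def mem_Times_iff)
  qed
  finally show ?thesis .
qed

lemma conv_sum:
  assumes U: "finite U" "supp p \<subseteq> U" and V: "finite V" "supp q \<subseteq> V"
  shows "(\<Sum>w\<in>(\<lambda>x. fst x @ snd x) ` (U \<times> V). fa_mult p q w * g w)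
       = (\<Sum>u\<in>U. \<Sum>v\<in>V. p u * q v * g (u @ v))"
proof -
  let ?h = "\<lambda>x. fst x @ snd x"
  have "(\<Sum>w\<in>?h ` (U \<times> V). fa_mult p q w * g w)
      = (\<Sum>w\<in>?h ` (U \<times> V). \<Sum>x\<in>{x\<in>U \<times> V. ?h x = w}. p (fst x) * q (snd x) * g (?h x))"
    by (rule sum.cong[OF refl]) (simp add: mult_split[OF U V] sum_distrib_right)
  also have "\<dots> = (\<Sum>x\<in>U \<times> V. p (fst x) * q (snd x) * g (?h x))"
    by (rule sum.group) (auto simp: U V)
  also have "\<dots> = (\<Sum>u\<in>U. \<Sum>v\<in>V. p u * q v * g (u @ v))"
    by (simp add: sum.cartesian_product split_def)
  finally show ?thesis .
qed

lemma conv_sum_supp: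
  assumes U: "finite U" "supp p \<subseteq> U" and V: "finite V" "supp q \<subseteq> V"
  shows "(\<Sum>w\<in>supp (fa_mult p q). fa_mult p q w * g w)
       = (\<Sum>u\<in>U. \<Sum>v\<in>V. p u * q v * g (u @ v))"
proof -
  let ?h = "\<lambda>x. fst x @ snd x"
  have "supp (fa_mult p q) \<subseteq> ?h ` (U \<times> V)" using supp_mult U V by blast
  then have "(\<Sum>w\<in>supp (fa_mult p q). fa_mult p q w * g w) = (\<Sum>w\<in>?h ` (U \<times> V). fa_mult p q w * g w)"
    by (intro sum.mono_neutral_left) (auto simp: U V supp_def)
  then show ?thesis using conv_sum[OF U V] by simp
qed

lemma mult_mon: "fa_mult (mon u) (mon v) = mon (u @ v)"
proof
  fix w
  have "fa_mult (mon u) (mon v) w = (\<Sum>x\<in>{x\<in>{u} \<times> {v}. fst x @ snd x = w}. mon u (fst x) * mon v (snd x))"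
    by (rule mult_split) (auto simp: supp_def mon_def)
  also have "\<dots> = mon (u @ v) w"
  proof (cases "u @ v = w")
    case True
    then have "{x\<in>{u} \<times> {v}. fst x @ snd x = w} = {(u,v)}" by auto
    then show ?thesis using True by (simp add: mon_def)
  next
    case False
    then have "{x\<in>{u} \<times> {v}. fst x @ snd x = w} = {}" by auto
    then show ?thesis using False by (simp add: mon_def)
  qed
  finally show "fa_mult (mon u) (mon v) w = mon (u @ v) w" .
qed

lemma mult_add_left: "fa_mult (fa_add x y) z = fa_add (fa_mult x z) (fa_mult y z)"
  by (auto simp: fa_mult_def fa_add_def sum.distrib algebra_simps)
lemma mult_sub_left: "fa_mult (fa_sub x y) z = fa_sub (fa_mult x z) (fa_mult y z)"
  by (auto simp: fa_mult_def fa_sub_def sum_subtractf algebra_simps)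
lemma mult_sub_right: "fa_mult z (fa_sub x y) = fa_sub (fa_mult z x) (fa_mult z y)"
  by (auto simp: fa_mult_def fa_sub_def sum_subtractf algebra_simps)
lemma mult_smult_right: "fa_mult z (fa_smult c x) = fa_smult c (fa_mult z x)"
  by (auto simp: fa_mult_def fa_smult_def sum_distrib_left algebra_simps)

lemma gen_mon: "fa_gen i = mon [i]" by (simp add: fa_gen_def mon_def)
lemma one_mon: "fa_one = mon []" by (simp add: fa_one_def mon_def)

definition letters_in :: "nat \<Rightarrow> (nat list \<Rightarrow> complex) \<Rightarrow> bool" where
  "letters_in n p \<longleftrightarrow> (\<forall>w\<in>supp p. set w \<subseteq> {1..n})"

lemma free_alg_iff: "p \<in> free_alg n \<longleftrightarrow> finite (supp p) \<and> letters_in n p"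
  by (auto simp: free_alg_def supp_def letters_in_def)

lemma free_alg_add: "x \<in> free_alg n \<Longrightarrow> y \<in> free_alg n \<Longrightarrow> fa_add x y \<in> free_alg n"
  using supp_add unfolding free_alg_iff letters_in_def by (meson finite_UnI finite_subset subsetD UnE)
lemma free_alg_sub: "x \<in> free_alg n \<Longrightarrow> y \<in> free_alg n \<Longrightarrow> fa_sub x y \<in> free_alg n"
  using supp_sub unfolding free_alg_iff letters_in_def by (meson finite_UnI finite_subset subsetD UnE)
lemma free_alg_smult: "x \<in> free_alg n \<Longrightarrow> fa_smult c x \<in> free_alg n"
  using supp_smult unfolding free_alg_iff letters_in_def by (meson finite_subset subsetD)
lemma free_alg_mon: "set w \<subseteq> {1..n} \<Longrightarrow> mon w \<in> free_alg n"
  unfolding free_alg_iff letters_in_def supp_mon by auto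
lemma free_alg_zero: "fa_zero \<in> free_alg n"
  unfolding free_alg_iff letters_in_def by (simp add: supp_def fa_zero_def)
lemma free_alg_mult: "x \<in> free_alg n \<Longrightarrow> y \<in> free_alg n \<Longrightarrow> fa_mult x y \<in> free_alg n"
proof -
  assume x: "x \<in> free_alg n" and y: "y \<in> free_alg n"
  then have f: "finite (supp (fa_mult x y))" using finite_supp_mult by (auto simp: free_alg_iff)
  have "letters_in n (fa_mult x y)"
    unfolding letters_in_def
  proof
    fix w assume "w \<in> supp (fa_mult x y)"
    then obtain u v where "u \<in> supp x" "v \<in> supp y" "w = u @ v" using supp_mult[of x y] by force
    then show "set w \<subseteq> {1..n}" using x y by (auto simp: free_alg_iff letters_in_def)
  qed
  then show ?thesis using f by (simp add: free_alg_iff)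
qed

lemma fa_sub_self: "fa_sub p p = fa_zero" by (simp add: fa_sub_def fa_zero_def)
lemma smult_one: "fa_smult 1 p = p" by (simp add: fa_smult_def)
lemma smult_smult: "fa_smult a (fa_smult b p) = fa_smult (a * b) p" by (simp add: fa_smult_def mult.assoc)

lemma monomial_expansion: "finite (supp p) \<Longrightarrow> p = (\<lambda>x. \<Sum>w\<in>supp p. p w * mon w x)"
proof
  fix x assume f: "finite (supp p)"
  have "(\<Sum>w\<in>supp p. p w * mon w x) = (\<Sum>w\<in>supp p. if x = w then p w else 0)"
    by (rule sum.cong) (auto simp: mon_def)
  also have "\<dots> = p x" using f by (simp add: supp_def)
  finally show "p x = (\<Sum>w\<in>supp p. p w * mon w x)" by simp
qed

lemma free_alg_lincomb:
  assumes "finite B" "B \<subseteq> free_alg n"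
  shows "(\<lambda>w. \<Sum>b\<in>B. c b * b w) \<in> free_alg n"
  using assms
proof (induction B rule: finite_induct)
  case empty
  then show ?case using free_alg_zero by (simp add: fa_zero_def)
next
  case (insert a B)
  have "(\<lambda>w. \<Sum>b\<in>insert a B. c b * b w) = fa_add (fa_smult (c a) a) (\<lambda>w. \<Sum>b\<in>B. c b * b w)"
    using insert by (simp add: fa_add_def fa_smult_def)
  then show ?case using insert by (auto intro!: free_alg_add free_alg_smult)
qed

lemma mon_inj: "mon u = mon v \<Longrightarrow> u = v"
  unfolding mon_def by (metis zero_neq_one)

section \<open>Words, parities of letters and reordering signs\<close>

text \<open>In \<open>A_G\<close> a word \<open>w\<close> equals \<open>\<plusminus>e_T\<close>, where \<open>T = odd_letters w\<close> is the set of letters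
  occurring an odd number of times and \<open>e_T\<close> is the product of the \<open>e_t\<close>, \<open>t \<in> T\<close>, in increasing
  order.  Signs are tracked as booleans (\<open>True\<close> meaning \<open>-1\<close>).\<close>

definition odd_letters :: "nat list \<Rightarrow> nat set" where
  "odd_letters w = {i. odd (count_list w i)}"

definition sign :: "bool \<Rightarrow> complex" where
  "sign b = (if b then -1 else 1)"

text \<open>\<open>e_i e_S = \<plusminus>e_{S \<triangle> {i}}\<close> with sign \<open>sign_left E i S\<close>: \<open>e_i\<close> moves past the smaller
  elements of \<open>S\<close>, anticommuting with its neighbours, and \<open>e_i\<^sup>2 = -1\<close> if \<open>i \<in> S\<close>.
  Symmetrically \<open>e_S e_j = \<plusminus>e_{S \<triangle> {j}}\<close> with sign \<open>sign_right E j S\<close>.\<close>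

definition sign_left :: "(nat \<Rightarrow> nat \<Rightarrow> bool) \<Rightarrow> nat \<Rightarrow> nat set \<Rightarrow> bool" where
  "sign_left E i S = (parity S (\<lambda>t. t < i \<and> E i t) \<noteq> (i \<in> S))"

definition sign_right :: "(nat \<Rightarrow> nat \<Rightarrow> bool) \<Rightarrow> nat \<Rightarrow> nat set \<Rightarrow> bool" where
  "sign_right E j S = (parity S (\<lambda>t. j < t \<and> E j t) \<noteq> (j \<in> S))"

text \<open>The sign of a word (\<open>w = \<plusminus>e_{odd_letters w}\<close>), computed by multiplying in the
  letters from the right; and the signs of \<open>e_S \<cdot> v\<close> and of \<open>v \<cdot> e_S\<close> for a word \<open>v\<close>.\<close>

fun sort_sign :: "(nat \<Rightarrow> nat \<Rightarrow> bool) \<Rightarrow> nat list \<Rightarrow> bool" where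
  "sort_sign E [] = False"
| "sort_sign E (i#w) = (sign_left E i (odd_letters w) \<noteq> sort_sign E w)"

fun sort_sign_right :: "(nat \<Rightarrow> nat \<Rightarrow> bool) \<Rightarrow> nat set \<Rightarrow> nat list \<Rightarrow> bool" where
  "sort_sign_right E S [] = False"
| "sort_sign_right E S (j#v) = (sign_right E j S \<noteq> sort_sign_right E (symdiff S {j}) v)"

fun sort_sign_left :: "(nat \<Rightarrow> nat \<Rightarrow> bool) \<Rightarrow> nat list \<Rightarrow> nat set \<Rightarrow> bool" where
  "sort_sign_left E [] S = False"
| "sort_sign_left E (i#v) S = (sign_left E i (symdiff (odd_letters v) S) \<noteq> sort_sign_left E v S)"

lemma odd_letters_Nil[simp]: "odd_letters [] = {}"
  by (simp add: odd_letters_def)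

lemma odd_letters_Cons: "odd_letters (i#w) = symdiff (odd_letters w) {i}"
  by (auto simp: odd_letters_def symdiff_def)

lemma odd_letters_append: "odd_letters (u@v) = symdiff (odd_letters u) (odd_letters v)"
  by (auto simp: odd_letters_def symdiff_def)

lemma odd_letters_sub: "odd_letters w \<subseteq> set w"
  using count_notin by (fastforce simp: odd_letters_def)

lemma finite_odd_letters[simp]: "finite (odd_letters w)"
  using odd_letters_sub finite_subset by blast

lemma odd_letters_distinct: "distinct l \<Longrightarrow> odd_letters l = set l"
  by (induction l) (auto simp: odd_letters_Cons symdiff_def)

lemma odd_letters_comm: "odd_letters (u@v) = odd_letters (v@u)"
  by (simp add: odd_letters_append symdiff_comm)

lemma sign_xor: "sign (a \<noteq> b) = sign a * sign b" by (auto simp: sign_def)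
lemma sign_xor_eq_not: "sign (a = (\<not> b)) = sign a * sign b" by (auto simp: sign_def)
lemma sign_nz[simp]: "sign a \<noteq> 0" by (auto simp: sign_def)
lemma sign_inj: "(sign a = sign b) = (a = b)" by (auto simp: sign_def)

lemma sort_sign_append_left:
  "sort_sign E (v@u) = (sort_sign_left E v (odd_letters u) \<noteq> sort_sign E u)"
  by (induction v) (auto simp: odd_letters_append)

lemma sort_sign_pair: "sort_sign E [i,j] = ((j < i \<and> E i j) \<noteq> (i = j))"
  by (auto simp: sign_left_def odd_letters_Cons parity_insert)

text \<open>The word \<open>sorted_word T\<close> is \<open>e_T\<close> itself: it needs no reordering.\<close>

abbreviation sorted_word :: "nat set \<Rightarrow> nat list" where
  "sorted_word \<equiv> sorted_list_of_set"

lemma sorted_word_set: "sorted_wrt (<) l \<Longrightarrow> sorted_word (set l) = l"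
  by (simp add: sorted_list_of_set.idem_if_sorted_distinct strict_sorted_iff)

lemma sorted_word_insert_min:
  assumes "finite X" "\<forall>x\<in>X. t < x"
  shows "sorted_word (insert t X) = t # sorted_word X"
proof -
  have "sorted_wrt (<) (t # sorted_word X)"
    using assms by (simp add: strict_sorted_list_of_set)
  moreover have "set (t # sorted_word X) = insert t X" using assms by simp
  ultimately show ?thesis using sorted_word_set by metis
qed

lemma sort_sign_sorted: "sorted_wrt (<) l \<Longrightarrow> sort_sign E l = False"
proof (induction l)
  case Nil then show ?case by simp
next
  case (Cons i l)
  have d: "distinct l" using Cons.prems strict_sorted_iff by auto
  have "parity (set l) (\<lambda>t. t < i \<and> E i t) = False" using Cons.prems by (intro parity_false) auto
  moreover have "i \<notin> set l" using Cons.prems by auto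
  ultimately show ?case using Cons by (simp add: sign_left_def odd_letters_distinct[OF d])
qed

lemma odd_letters_sorted_word: "finite S \<Longrightarrow> odd_letters (sorted_word S) = S"
  by (simp add: odd_letters_distinct)

lemma sort_sign_sorted_word: "sort_sign E (sorted_word S) = False"
  by (simp add: sort_sign_sorted strict_sorted_list_of_set)

section \<open>Coordinates with respect to the sorted monomials\<close>

text \<open>\<open>coord E p T\<close> is the coefficient of \<open>e_T\<close> in \<open>p\<close> after reducing every word to its
  signed sorted monomial.  It is linear, and it is the functional used to detect membership
  in the relation ideal.\<close>

definition coord_word :: "(nat \<Rightarrow> nat \<Rightarrow> bool) \<Rightarrow> nat list \<Rightarrow> nat set \<Rightarrow> complex" where
  "coord_word E w T = (if odd_letters w = T then sign (sort_sign E w) else 0)"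
definition coord :: "(nat \<Rightarrow> nat \<Rightarrow> bool) \<Rightarrow> (nat list \<Rightarrow> complex) \<Rightarrow> nat set \<Rightarrow> complex" where
  "coord E p T = (\<Sum>w\<in>supp p. p w * coord_word E w T)"

lemma coord_superset: "finite W \<Longrightarrow> supp p \<subseteq> W \<Longrightarrow> coord E p T = (\<Sum>w\<in>W. p w * coord_word E w T)"
  unfolding coord_def by (rule sum.mono_neutral_left) (auto simp: supp_def)

lemma coord_add: "finite (supp x) \<Longrightarrow> finite (supp y) \<Longrightarrow> coord E (fa_add x y) T = coord E x T + coord E y T"
proof -
  assume fx: "finite (supp x)" and fy: "finite (supp y)"
  let ?W = "supp x \<union> supp y"
  have "coord E (fa_add x y) T = (\<Sum>w\<in>?W. fa_add x y w * coord_word E w T)"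
    using fx fy supp_add by (intro coord_superset) auto
  also have "\<dots> = (\<Sum>w\<in>?W. x w * coord_word E w T) + (\<Sum>w\<in>?W. y w * coord_word E w T)"
    by (simp add: fa_add_def sum.distrib algebra_simps)
  also have "\<dots> = coord E x T + coord E y T"
    using fx fy coord_superset[of ?W x E T] coord_superset[of ?W y E T] by auto
  finally show ?thesis .
qed

lemma coord_sub: "finite (supp x) \<Longrightarrow> finite (supp y) \<Longrightarrow> coord E (fa_sub x y) T = coord E x T - coord E y T"
proof -
  assume fx: "finite (supp x)" and fy: "finite (supp y)"
  let ?W = "supp x \<union> supp y"
  have "coord E (fa_sub x y) T = (\<Sum>w\<in>?W. fa_sub x y w * coord_word E w T)"
    using fx fy supp_sub by (intro coord_superset) auto
  also have "\<dots> = (\<Sum>w\<in>?W. x w * coord_word E w T) - (\<Sum>w\<in>?W. y w * coord_word E w T)"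
    by (simp add: fa_sub_def sum_subtractf algebra_simps)
  also have "\<dots> = coord E x T - coord E y T"
    using fx fy coord_superset[of ?W x E T] coord_superset[of ?W y E T] by auto
  finally show ?thesis .
qed

lemma coord_smult: "finite (supp x) \<Longrightarrow> coord E (fa_smult c x) T = c * coord E x T"
proof -
  assume fx: "finite (supp x)"
  have "coord E (fa_smult c x) T = (\<Sum>w\<in>supp x. fa_smult c x w * coord_word E w T)"
    using fx supp_smult by (intro coord_superset) auto
  then show ?thesis by (simp add: fa_smult_def coord_def sum_distrib_left algebra_simps)
qed

lemma coord_mon: "coord E (mon w) T = coord_word E w T"
  by (simp add: coord_def supp_mon) (simp add: mon_def)

lemma coord_zero: "coord E fa_zero T = 0"
  by (simp add: coord_def supp_def fa_zero_def)

lemma coord_lincomb: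
  assumes "finite B" "B \<subseteq> free_alg n"
  shows "coord E (\<lambda>w. \<Sum>b\<in>B. c b * b w) T = (\<Sum>b\<in>B. c b * coord E b T)"
  using assms
proof (induction B rule: finite_induct)
  case empty
  then show ?case using coord_zero by (simp add: fa_zero_def)
next
  case (insert a B)
  have eq: "(\<lambda>w. \<Sum>b\<in>insert a B. c b * b w) = fa_add (fa_smult (c a) a) (\<lambda>w. \<Sum>b\<in>B. c b * b w)"
    using insert by (simp add: fa_add_def fa_smult_def)
  have fa: "a \<in> free_alg n" and fB: "(\<lambda>w. \<Sum>b\<in>B. c b * b w) \<in> free_alg n"
    using insert free_alg_lincomb[of B n c] by auto
  have "coord E (\<lambda>w. \<Sum>b\<in>insert a B. c b * b w) T = c a * coord E a T + coord E (\<lambda>w. \<Sum>b\<in>B. c b * b w) T"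
    unfolding eq using fa fB free_alg_smult[OF fa]
    by (simp add: coord_add coord_smult free_alg_iff)
  then show ?case using insert by simp
qed

lemma coord_sorted_word: "finite T \<Longrightarrow> coord E (mon (sorted_word T)) T' = (if T = T' then 1 else 0)"
  by (simp add: coord_mon coord_word_def odd_letters_sorted_word sort_sign_sorted_word sign_def)

section \<open>Clifford graph algebras\<close>

locale clifford_graph =
  fixes n :: nat and E :: "nat \<Rightarrow> nat \<Rightarrow> bool"
  assumes simple: "simple_graph n E"
begin

abbreviation I where "I \<equiv> clifford_ideal n E"

lemma graph_sym: "i \<in> {1..n} \<Longrightarrow> j \<in> {1..n} \<Longrightarrow> E i j = E j i"
  using simple by (auto simp: simple_graph_def)

lemma graph_irrefl: "i \<in> {1..n} \<Longrightarrow> \<not> E i i"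
  using simple by (auto simp: simple_graph_def)

text \<open>Associativity of \<open>e_i \<cdot> e_S \<cdot> e_j\<close>: multiplying by \<open>e_j\<close> on the right and by \<open>e_i\<close>
  on the left can be done in either order.  This needs the symmetry of \<open>E\<close>.\<close>

lemma sign_left_right_assoc:
  assumes f: "finite S" and i: "i \<in> {1..n}" and j: "j \<in> {1..n}"
  shows "(sign_left E i (symdiff S {j}) \<noteq> sign_right E j S) = (sign_left E i S \<noteq> sign_right E j (symdiff S {i}))"
proof (cases "i = j")
  case True
  have m: "(i \<in> symdiff S {i}) = (i \<notin> S)" by (auto simp: symdiff_def)
  show ?thesis using True unfolding sign_left_def sign_right_def parity_symdiff_singleton[OF f] m by auto
next
  case False
  have m: "(i \<in> symdiff S {j}) = (i \<in> S)" "(j \<in> symdiff S {i}) = (j \<in> S)" using False by (auto simp: symdiff_def)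
  have e: "(j < i \<and> E i j) = (j < i \<and> E j i)" using graph_sym[OF i j] by auto
  show ?thesis unfolding sign_left_def sign_right_def parity_symdiff_singleton[OF f] m using e by auto
qed

text \<open>Hence the sign of a word can equally be computed by appending letters on the right,
  and the sign of \<open>e_S \<cdot> v\<close> is given by \<open>sort_sign_right\<close>.\<close>

lemma sort_sign_snoc:
  assumes "set u \<subseteq> {1..n}" "j \<in> {1..n}"
  shows "sort_sign E (u@[j]) = (sort_sign E u \<noteq> sign_right E j (odd_letters u))"
  using assms
proof (induction u)
  case Nil then show ?case by (simp add: sign_left_def sign_right_def)
next
  case (Cons i u)
  have i: "i \<in> {1..n}" using Cons.prems by auto
  have IH: "sort_sign E (u@[j]) = (sort_sign E u \<noteq> sign_right E j (odd_letters u))" using Cons by auto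
  have "sort_sign E ((i#u)@[j]) = (sign_left E i (symdiff (odd_letters u) {j}) \<noteq> sort_sign E (u@[j]))"
    by (simp add: odd_letters_append odd_letters_Cons)
  also have "\<dots> = ((sign_left E i (symdiff (odd_letters u) {j}) \<noteq> sign_right E j (odd_letters u)) \<noteq> sort_sign E u)" using IH by auto
  also have "\<dots> = ((sign_left E i (odd_letters u) \<noteq> sign_right E j (symdiff (odd_letters u) {i})) \<noteq> sort_sign E u)"
    using sign_left_right_assoc[OF finite_odd_letters i Cons.prems(2)] by simp
  also have "\<dots> = (sort_sign E (i#u) \<noteq> sign_right E j (odd_letters (i#u)))" by (auto simp: odd_letters_Cons)
  finally show ?case .
qed

lemma sort_sign_append_right:
  assumes "set u \<subseteq> {1..n}" "set v \<subseteq> {1..n}"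
  shows "sort_sign E (u@v) = (sort_sign E u \<noteq> sort_sign_right E (odd_letters u) v)"
  using assms
proof (induction v arbitrary: u)
  case Nil then show ?case by simp
next
  case (Cons j v)
  have "sort_sign E (u@j#v) = sort_sign E ((u@[j])@v)" by simp
  also have "\<dots> = (sort_sign E (u@[j]) \<noteq> sort_sign_right E (odd_letters (u@[j])) v)" using Cons.IH[of "u@[j]"] Cons.prems by auto
  also have "\<dots> = ((sort_sign E u \<noteq> sign_right E j (odd_letters u)) \<noteq> sort_sign_right E (symdiff (odd_letters u) {j}) v)"
    using sort_sign_snoc Cons.prems by (simp add: odd_letters_append odd_letters_Cons)
  also have "\<dots> = (sort_sign E u \<noteq> sort_sign_right E (odd_letters u) (j#v))" by auto
  finally show ?case .
qed

text \<open>\<open>e_i\<close> commutes with \<open>e_S\<close> iff \<open>i\<close> has an even number of neighbours in \<open>S\<close>.\<close>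

lemma sign_left_right:
  assumes "finite S" "S \<subseteq> {1..n}" "i \<in> {1..n}"
  shows "(sign_left E i S \<noteq> sign_right E i S) = parity S (E i)"
proof -
  have "(sign_left E i S \<noteq> sign_right E i S) = (parity S (\<lambda>t. t < i \<and> E i t) \<noteq> parity S (\<lambda>t. i < t \<and> E i t))"
    unfolding sign_left_def sign_right_def by auto
  also have "\<dots> = parity S (\<lambda>t. (t < i \<and> E i t) \<noteq> (i < t \<and> E i t))"
    by (subst parity_xor[OF assms(1)]) (rule refl)
  also have "\<dots> = parity S (E i)"
  proof (rule parity_cong)
    fix t assume "t \<in> S"
    then have "t \<in> {1..n}" using assms by auto
    then show "((t < i \<and> E i t) \<noteq> (i < t \<and> E i t)) = E i t"
      using graph_irrefl[of t] by (cases "t = i") auto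
  qed
  finally show ?thesis .
qed

text \<open>The sets \<open>T\<close> whose monomials \<open>e_T\<close> will turn out to be central: the GF(2)-kernel of
  the adjacency matrix.\<close>

definition central_sets :: "nat set set" where "central_sets = adj_kernel {1..n} E"

lemma central_sets_sub: "T \<in> central_sets \<Longrightarrow> T \<subseteq> {1..n}" by (auto simp: central_sets_def adj_kernel_def)

lemma central_sets_finite: "T \<in> central_sets \<Longrightarrow> finite T" using central_sets_sub finite_subset by blast

lemma finite_central_sets: "finite central_sets"
proof -
  have "central_sets \<subseteq> Pow {1..n}" by (auto simp: central_sets_def adj_kernel_def)
  then show ?thesis by (meson finite_Pow_iff finite_atLeastAtMost finite_subset)
qed

text \<open>A word whose odd letters form a central set commutes, sign included, with any word.\<close>

lemma sort_sign_move_central: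
  assumes w: "set w \<subseteq> {1..n}" and PK: "odd_letters w \<in> central_sets" and j: "j \<in> {1..n}" and y: "set y \<subseteq> {1..n}"
  shows "sort_sign E (w@[j]@y) = sort_sign E (j#w@y)"
proof -
  have PS: "odd_letters w \<subseteq> {1..n}" using odd_letters_sub w by blast
  have np: "\<not> parity (odd_letters w) (E j)" using PK j by (auto simp: central_sets_def adj_kernel_def)
  have eq: "sign_right E j (odd_letters w) = sign_left E j (odd_letters w)" using sign_left_right[OF finite_odd_letters PS j] np by auto
  have "sort_sign E (w@[j]@y) = sort_sign E ((w@[j])@y)" by simp
  also have "\<dots> = (sort_sign E (w@[j]) \<noteq> sort_sign_right E (odd_letters (w@[j])) y)" by (rule sort_sign_append_right) (use w j y in auto)
  also have "\<dots> = (sort_sign E (j#w) \<noteq> sort_sign_right E (odd_letters (j#w)) y)"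
    using sort_sign_snoc[OF w j] eq by (auto simp: odd_letters_append odd_letters_Cons)
  also have "\<dots> = sort_sign E ((j#w)@y)" by (rule sort_sign_append_right[symmetric]) (use w j y in auto)
  finally show ?thesis by simp
qed

lemma sort_sign_commute_central:
  assumes w: "set w \<subseteq> {1..n}" and PK: "odd_letters w \<in> central_sets" and v: "set v \<subseteq> {1..n}"
  shows "sort_sign E (w@v) = sort_sign E (v@w)"
  using v
proof (induction v)
  case Nil then show ?case by simp
next
  case (Cons j v)
  have "sort_sign E (w@j#v) = sort_sign E (j#w@v)" using sort_sign_move_central[OF w PK, of j v] Cons.prems by auto
  also have "\<dots> = (sign_left E j (odd_letters (w@v)) \<noteq> sort_sign E (w@v))" by simp
  also have "\<dots> = (sign_left E j (odd_letters (v@w)) \<noteq> sort_sign E (v@w))" using Cons odd_letters_comm by auto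
  also have "\<dots> = sort_sign E ((j#v)@w)" by simp
  finally show ?case .
qed

lemma sort_sign_right_left:
  assumes S: "S \<in> central_sets" and v: "set v \<subseteq> {1..n}"
  shows "sort_sign_right E S v = sort_sign_left E v S"
proof -
  have Sn: "S \<subseteq> {1..n}" using S by (auto simp: central_sets_def adj_kernel_def)
  have fS: "finite S" using Sn finite_subset by blast
  let ?u = "sorted_word S"
  have u: "set ?u \<subseteq> {1..n}" using Sn fS by simp
  have Pu: "odd_letters ?u = S" using odd_letters_sorted_word[OF fS] .
  have "sort_sign E (?u @ v) = sort_sign E (v @ ?u)" using sort_sign_commute_central[OF u _ v] Pu S by simp
  moreover have "sort_sign E (?u @ v) = sort_sign_right E S v" using sort_sign_append_right[OF u v] Pu sort_sign_sorted_word by simp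
  moreover have "sort_sign E (v @ ?u) = sort_sign_left E v S" using sort_sign_append_left[of E v ?u] Pu sort_sign_sorted_word by simp
  ultimately show ?thesis by simp
qed

text \<open>Coordinates of products: \<open>coord (p \<cdot> q) T\<close> only involves coordinates of \<open>p\<close>.\<close>

lemma coord_word_append_right:
  assumes "set u \<subseteq> {1..n}" "set v \<subseteq> {1..n}"
  shows "coord_word E (u@v) T = coord_word E u (symdiff T (odd_letters v)) * sign (sort_sign_right E (symdiff T (odd_letters v)) v)"
  using sort_sign_append_right[OF assms] unfolding coord_word_def odd_letters_append
  by (auto simp: symdiff_eq_iff sign_def)

lemma coord_word_append_left:
  shows "coord_word E (v@u) T = coord_word E u (symdiff T (odd_letters v)) * sign (sort_sign_left E v (symdiff T (odd_letters v)))"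
proof (cases "odd_letters u = symdiff T (odd_letters v)")
  case True
  then have "odd_letters (v@u) = T" by (simp add: odd_letters_append symdiff_comm[of "odd_letters v"])
  then show ?thesis using True sort_sign_append_left[of E v u] by (auto simp: coord_word_def sign_def)
next
  case False
  then have "odd_letters (v@u) \<noteq> T" by (auto simp: odd_letters_append symdiff_comm[of "odd_letters v"])
  then show ?thesis using False by (simp add: coord_word_def)
qed

lemma coord_mult_right:
  assumes p: "p \<in> free_alg n" and q: "q \<in> free_alg n"
  shows "coord E (fa_mult p q) T = (\<Sum>v\<in>supp q. q v * sign (sort_sign_right E (symdiff T (odd_letters v)) v) * coord E p (symdiff T (odd_letters v)))"
proof -
  have fp: "finite (supp p)" and fq: "finite (supp q)" using p q by (auto simp: free_alg_iff)
  have "coord E (fa_mult p q) T = (\<Sum>u\<in>supp p. \<Sum>v\<in>supp q. p u * q v * coord_word E (u@v) T)"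
    unfolding coord_def by (rule conv_sum_supp) (auto simp: fp fq)
  also have "\<dots> = (\<Sum>u\<in>supp p. \<Sum>v\<in>supp q. q v * sign (sort_sign_right E (symdiff T (odd_letters v)) v) * (p u * coord_word E u (symdiff T (odd_letters v))))"
  proof (intro sum.cong refl)
    fix u v assume "u \<in> supp p" "v \<in> supp q"
    then have "set u \<subseteq> {1..n}" "set v \<subseteq> {1..n}" using p q by (auto simp: free_alg_iff letters_in_def)
    then show "p u * q v * coord_word E (u@v) T = q v * sign (sort_sign_right E (symdiff T (odd_letters v)) v) * (p u * coord_word E u (symdiff T (odd_letters v)))"
      by (simp add: coord_word_append_right)
  qed
  also have "\<dots> = (\<Sum>v\<in>supp q. \<Sum>u\<in>supp p. q v * sign (sort_sign_right E (symdiff T (odd_letters v)) v) * (p u * coord_word E u (symdiff T (odd_letters v))))"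
    by (rule sum.swap)
  also have "\<dots> = (\<Sum>v\<in>supp q. q v * sign (sort_sign_right E (symdiff T (odd_letters v)) v) * coord E p (symdiff T (odd_letters v)))"
    by (simp add: coord_def sum_distrib_left)
  finally show ?thesis .
qed

lemma coord_mult_left:
  assumes p: "p \<in> free_alg n" and q: "q \<in> free_alg n"
  shows "coord E (fa_mult q p) T = (\<Sum>v\<in>supp q. q v * sign (sort_sign_left E v (symdiff T (odd_letters v))) * coord E p (symdiff T (odd_letters v)))"
proof -
  have fp: "finite (supp p)" and fq: "finite (supp q)" using p q by (auto simp: free_alg_iff)
  have "coord E (fa_mult q p) T = (\<Sum>v\<in>supp q. \<Sum>u\<in>supp p. q v * p u * coord_word E (v@u) T)"
    unfolding coord_def by (rule conv_sum_supp) (auto simp: fp fq)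
  also have "\<dots> = (\<Sum>v\<in>supp q. \<Sum>u\<in>supp p. q v * sign (sort_sign_left E v (symdiff T (odd_letters v))) * (p u * coord_word E u (symdiff T (odd_letters v))))"
    by (intro sum.cong refl) (simp add: coord_word_append_left)
  also have "\<dots> = (\<Sum>v\<in>supp q. q v * sign (sort_sign_left E v (symdiff T (odd_letters v))) * coord E p (symdiff T (odd_letters v)))"
    by (simp add: coord_def sum_distrib_left)
  finally show ?thesis .
qed

lemma relation_coord_zero:
  assumes "r \<in> clifford_relations n E"
  shows "r \<in> free_alg n \<and> coord E r = (\<lambda>_. 0)"
proof -
  consider (square) i where "i \<in> {1..n}" "r = fa_add (mon [i,i]) (mon [])"
    | (anti) i j where "i \<in> {1..n}" "j \<in> {1..n}" "i \<noteq> j" "E i j" "r = fa_add (mon [i,j]) (mon [j,i])"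
    | (comm) i j where "i \<in> {1..n}" "j \<in> {1..n}" "i \<noteq> j" "\<not> E i j" "r = fa_sub (mon [i,j]) (mon [j,i])"
    using assms unfolding clifford_relations_def gen_mon one_mon mult_mon by auto
  then show ?thesis
  proof cases
    case square
    have "odd_letters [i,i] = {}" by (auto simp: odd_letters_Cons symdiff_def)
    moreover have "sort_sign E [i,i]" by (simp only: sort_sign_pair) simp
    ultimately have "coord E r T = 0" for T
      unfolding square(2) coord_add[OF finite_supp_mon finite_supp_mon]
      by (simp add: coord_mon coord_word_def sign_def del: sort_sign.simps(2))
    then show ?thesis using square by (auto intro!: free_alg_add free_alg_mon)
  next
    case anti
    have "odd_letters [i,j] = {i,j}" "odd_letters [j,i] = {i,j}"
      using anti by (auto simp: odd_letters_Cons symdiff_def)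
    moreover have "sort_sign E [i,j] = (\<not> sort_sign E [j,i])"
      unfolding sort_sign_pair using anti graph_sym[of i j] by (cases "i < j") auto
    ultimately have "coord E r T = 0" for T
      unfolding anti(5) coord_add[OF finite_supp_mon finite_supp_mon]
      by (simp add: coord_mon coord_word_def sign_def del: sort_sign.simps)
    then show ?thesis using anti by (auto intro!: free_alg_add free_alg_mon)
  next
    case comm
    have "odd_letters [i,j] = {i,j}" "odd_letters [j,i] = {i,j}"
      using comm by (auto simp: odd_letters_Cons symdiff_def)
    moreover have "sort_sign E [i,j] = sort_sign E [j,i]"
      unfolding sort_sign_pair using comm graph_sym[of i j] by (cases "i < j") auto
    ultimately have "coord E r T = 0" for T
      unfolding comm(5) coord_sub[OF finite_supp_mon finite_supp_mon]
      by (simp add: coord_mon coord_word_def del: sort_sign.simps)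
    then show ?thesis using comm by (auto intro!: free_alg_sub free_alg_mon)
  qed
qed

text \<open>Since the coordinates of a product are combinations of those of either factor, the
  property of having zero coordinates passes from the relations to the whole ideal.\<close>

lemma ideal_coord_zero:
  assumes "x \<in> I"
  shows "x \<in> free_alg n \<and> coord E x = (\<lambda>_. 0)"
  using assms
proof (induction rule: clifford_ideal.induct)
  case (rel r)
  then show ?case by (rule relation_coord_zero)
next
  case zero
  then show ?case by (auto simp: free_alg_zero coord_zero)
next
  case (add x y)
  then have "fa_add x y \<in> free_alg n" by (auto intro: free_alg_add)
  then show ?case using add by (auto simp: coord_add free_alg_iff)
next
  case (smult x c)
  then have "fa_smult c x \<in> free_alg n" by (auto intro: free_alg_smult)
  then show ?case using smult by (auto simp: coord_smult free_alg_iff)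
next
  case (lmult a x)
  have "coord E (fa_mult a x) T = 0" for T using coord_mult_left[of x a T] lmult by simp
  then show ?case using lmult free_alg_mult by auto
next
  case (rmult a x)
  have "coord E (fa_mult x a) T = 0" for T using coord_mult_right[of x a T] rmult by simp
  then show ?case using rmult free_alg_mult by auto
qed

definition equiv_I :: "(nat list \<Rightarrow> complex) \<Rightarrow> (nat list \<Rightarrow> complex) \<Rightarrow> bool" where
  "equiv_I p q \<longleftrightarrow> fa_sub p q \<in> I"

lemma equiv_I_refl: "equiv_I p p" by (simp add: equiv_I_def fa_sub_self clifford_ideal.zero)

lemma equiv_I_trans: "equiv_I p q \<Longrightarrow> equiv_I q r \<Longrightarrow> equiv_I p r"
proof -
  assume "equiv_I p q" "equiv_I q r"
  then have "fa_add (fa_sub p q) (fa_sub q r) \<in> I" by (simp add: equiv_I_def clifford_ideal.add)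
  moreover have "fa_add (fa_sub p q) (fa_sub q r) = fa_sub p r" by (simp add: fa_add_def fa_sub_def)
  ultimately show ?thesis by (simp add: equiv_I_def)
qed

lemma equiv_I_smult: "equiv_I p q \<Longrightarrow> equiv_I (fa_smult c p) (fa_smult c q)"
proof -
  assume "equiv_I p q"
  then have "fa_smult c (fa_sub p q) \<in> I" by (simp add: equiv_I_def clifford_ideal.smult)
  moreover have "fa_smult c (fa_sub p q) = fa_sub (fa_smult c p) (fa_smult c q)"
    by (simp add: fa_smult_def fa_sub_def algebra_simps)
  ultimately show ?thesis by (simp add: equiv_I_def)
qed

lemma equiv_I_lmult: "a \<in> free_alg n \<Longrightarrow> equiv_I p q \<Longrightarrow> equiv_I (fa_mult a p) (fa_mult a q)"
  unfolding equiv_I_def mult_sub_right[symmetric] by (rule clifford_ideal.lmult)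

lemma I_sum: "finite W \<Longrightarrow> (\<forall>w\<in>W. g w \<in> I) \<Longrightarrow> (\<lambda>x. \<Sum>w\<in>W. g w x) \<in> I"
proof (induction W rule: finite_induct)
  case empty
  have "(\<lambda>x. \<Sum>w\<in>{}. g w x) = fa_zero" by (simp add: fa_zero_def)
  then show ?case by (simp add: clifford_ideal.zero)
next
  case (insert a W)
  have "(\<lambda>x. \<Sum>w\<in>insert a W. g w x) = fa_add (g a) (\<lambda>x. \<Sum>w\<in>W. g w x)"
    using insert by (simp add: fa_add_def)
  then show ?case using insert by (simp add: clifford_ideal.add)
qed

lemma mon_square:
  assumes "i \<in> {1..n}" "set w \<subseteq> {1..n}"
  shows "equiv_I (mon (i#i#w)) (fa_smult (-1) (mon w))"
proof -
  have "fa_add (mon [i,i]) (mon []) \<in> I"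
    using assms(1) by (intro clifford_ideal.rel) (auto simp: clifford_relations_def gen_mon one_mon mult_mon)
  then have "fa_mult (fa_add (mon [i,i]) (mon [])) (mon w) \<in> I"
    using free_alg_mon[OF assms(2)] by (intro clifford_ideal.rmult)
  moreover have "fa_mult (fa_add (mon [i,i]) (mon [])) (mon w) = fa_sub (mon (i#i#w)) (fa_smult (-1) (mon w))"
    by (simp add: mult_add_left mult_mon) (simp add: fa_add_def fa_sub_def fa_smult_def)
  ultimately show ?thesis by (simp add: equiv_I_def)
qed

lemma mon_swap:
  assumes "i \<in> {1..n}" "t \<in> {1..n}" "i \<noteq> t" "set w \<subseteq> {1..n}"
  shows "equiv_I (mon (i#t#w)) (fa_smult (sign (E i t)) (mon (t#i#w)))"
proof (cases "E i t")
  case True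
  have "fa_add (mon [i,t]) (mon [t,i]) \<in> I"
    using assms True by (intro clifford_ideal.rel) (auto simp: clifford_relations_def gen_mon mult_mon)
  then have "fa_mult (fa_add (mon [i,t]) (mon [t,i])) (mon w) \<in> I"
    using free_alg_mon[OF assms(4)] by (intro clifford_ideal.rmult)
  moreover have "fa_mult (fa_add (mon [i,t]) (mon [t,i])) (mon w)
      = fa_sub (mon (i#t#w)) (fa_smult (sign (E i t)) (mon (t#i#w)))"
    using True by (simp add: mult_add_left mult_mon sign_def) (simp add: fa_add_def fa_sub_def fa_smult_def)
  ultimately show ?thesis by (simp add: equiv_I_def)
next
  case False
  have "fa_sub (mon [i,t]) (mon [t,i]) \<in> I"
    using assms False by (intro clifford_ideal.rel) (auto simp: clifford_relations_def gen_mon mult_mon)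
  then have "fa_mult (fa_sub (mon [i,t]) (mon [t,i])) (mon w) \<in> I"
    using free_alg_mon[OF assms(4)] by (intro clifford_ideal.rmult)
  moreover have "fa_mult (fa_sub (mon [i,t]) (mon [t,i])) (mon w)
      = fa_sub (mon (i#t#w)) (fa_smult (sign (E i t)) (mon (t#i#w)))"
    using False by (simp add: mult_sub_left mult_mon sign_def smult_one)
  ultimately show ?thesis by (simp add: equiv_I_def)
qed

lemma mon_cons_sorted:
  assumes "sorted_wrt (<) l" "set l \<subseteq> {1..n}" "i \<in> {1..n}"
  shows "equiv_I (mon (i#l)) (fa_smult (sign (sign_left E i (set l))) (mon (sorted_word (symdiff (set l) {i}))))"
  using assms
proof (induction l)
  case Nil
  have "symdiff {} {i} = {i}" by (simp add: symdiff_def)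
  then show ?case by (simp add: sign_left_def sign_def smult_one equiv_I_refl)
next
  case (Cons t l')
  have ltl: "\<forall>x\<in>set l'. t < x" and sl': "sorted_wrt (<) l'" using Cons.prems by auto
  have t: "t \<in> {1..n}" and l'r: "set l' \<subseteq> {1..n}" using Cons.prems by auto
  have tnot: "t \<notin> set l'" using ltl by auto
  consider (lt) "i < t" | (eq) "i = t" | (gt) "t < i" by linarith
  then show ?case
  proof cases
    case lt
    text \<open>\<open>e_i\<close> is already in place.\<close>
    have inot: "i \<notin> set (t#l')" using lt Cons.prems by auto
    have "symdiff (set (t#l')) {i} = insert i (set (t#l'))" using inot by (auto simp: symdiff_def)
    moreover have "sorted_word (insert i (set (t#l'))) = i # sorted_word (set (t#l'))"
      by (rule sorted_word_insert_min) (use lt Cons.prems in auto)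
    moreover have "parity (set (t#l')) (\<lambda>s. s < i \<and> E i s) = False"
      by (rule parity_false) (use lt ltl in force)
    ultimately show ?thesis using inot sorted_word_set[OF Cons.prems(1)]
      by (simp add: sign_left_def sign_def smult_one equiv_I_refl)
  next
    case eq
    text \<open>\<open>e_i e_i = -1\<close>.\<close>
    have inot: "i \<notin> set l'" using eq tnot by auto
    have "symdiff (set (t#l')) {i} = set l'" using eq inot by (auto simp: symdiff_def)
    moreover have "parity (set (t#l')) (\<lambda>s. s < i \<and> E i s) = False"
      by (rule parity_false) (use eq ltl in force)
    ultimately show ?thesis using eq sl' mon_square[OF Cons.prems(3) l'r]
      by (simp add: sign_left_def sign_def sorted_word_set)
  next
    case gt
    text \<open>Swap \<open>e_i\<close> past \<open>e_t\<close> and recurse.\<close>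
    define L' where "L' = sorted_word (symdiff (set l') {i})"
    define s' where "s' = sign (sign_left E i (set l'))"
    have IH: "equiv_I (mon (i#l')) (fa_smult s' (mon L'))"
      using Cons.IH sl' l'r Cons.prems(3) by (simp add: s'_def L'_def)
    have mt: "mon [t] \<in> free_alg n" using t by (intro free_alg_mon) auto
    have IH2: "equiv_I (mon (t#i#l')) (fa_smult s' (mon (t#L')))"
      using equiv_I_lmult[OF mt IH] by (simp add: mult_mon mult_smult_right)
    have ti: "i \<noteq> t" using gt by simp
    have C: "equiv_I (mon (i#t#l')) (fa_smult (sign (E i t) * s') (mon (t#L')))"
      using equiv_I_trans[OF mon_swap[OF Cons.prems(3) t ti l'r] equiv_I_smult[OF IH2]]
      by (simp add: smult_smult)
    have ins: "symdiff (set (t#l')) {i} = insert t (symdiff (set l') {i})"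
      using gt tnot by (auto simp: symdiff_def)
    have "t # L' = sorted_word (symdiff (set (t#l')) {i})"
      unfolding ins L'_def using ltl gt by (subst sorted_word_insert_min) (auto simp: symdiff_def)
    moreover have "sign_left E i (set (t#l')) = (E i t \<noteq> sign_left E i (set l'))"
      unfolding sign_left_def using gt tnot by (simp add: parity_insert) blast
    ultimately show ?thesis using C by (simp add: s'_def sign_xor sign_xor_eq_not)
  qed
qed

lemma mon_normal_form:
  assumes "set w \<subseteq> {1..n}"
  shows "equiv_I (mon w) (fa_smult (sign (sort_sign E w)) (mon (sorted_word (odd_letters w))))"
  using assms
proof (induction w)
  case Nil
  then show ?case by (simp add: sign_def smult_one equiv_I_refl)
next
  case (Cons i w)
  have i: "i \<in> {1..n}" and wr: "set w \<subseteq> {1..n}" using Cons.prems by auto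
  let ?c = "sign (sort_sign E w)"
  have mi: "mon [i] \<in> free_alg n" using i by (intro free_alg_mon) auto
  have PS: "odd_letters w \<subseteq> {1..n}" using odd_letters_sub wr by blast
  have s1: "equiv_I (mon (i#w)) (fa_smult ?c (mon (i # sorted_word (odd_letters w))))"
    using equiv_I_lmult[OF mi Cons.IH[OF wr]] by (simp add: mult_mon mult_smult_right)
  have mv: "equiv_I (mon (i # sorted_word (odd_letters w))) (fa_smult (sign (sign_left E i (odd_letters w))) (mon (sorted_word (symdiff (odd_letters w) {i}))))"
    using mon_cons_sorted[of "sorted_word (odd_letters w)" i] PS i by (simp add: strict_sorted_list_of_set)
  have s2: "equiv_I (mon (i#w)) (fa_smult (?c * sign (sign_left E i (odd_letters w))) (mon (sorted_word (symdiff (odd_letters w) {i}))))"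
    using equiv_I_trans[OF s1 equiv_I_smult[OF mv, of ?c]] by (simp add: smult_smult)
  then show ?case by (simp add: odd_letters_Cons sign_xor_eq_not mult.commute)
qed

definition normal_form :: "(nat list \<Rightarrow> complex) \<Rightarrow> (nat list \<Rightarrow> complex)" where
  "normal_form p = (\<lambda>x. \<Sum>T\<in>Pow {1..n}. coord E p T * mon (sorted_word T) x)"

lemma normal_form_expansion:
  assumes r: "letters_in n p"
  shows "normal_form p =
           (\<lambda>x. \<Sum>w\<in>supp p. p w * (sign (sort_sign E w) * mon (sorted_word (odd_letters w)) x))"
proof
  fix x
  have "normal_form p x =
      (\<Sum>w\<in>supp p. \<Sum>T\<in>Pow {1..n}. p w * (coord_word E w T * mon (sorted_word T) x))"
    unfolding normal_form_def coord_def sum_distrib_right mult.assoc by (rule sum.swap)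
  also have "\<dots> = (\<Sum>w\<in>supp p. p w * (sign (sort_sign E w) * mon (sorted_word (odd_letters w)) x))"
  proof (rule sum.cong[OF refl])
    fix w assume "w \<in> supp p"
    then have w: "odd_letters w \<in> Pow {1..n}" using r odd_letters_sub by (auto simp: letters_in_def)
    have "(\<Sum>T\<in>Pow {1..n}. p w * (coord_word E w T * mon (sorted_word T) x))
        = (\<Sum>T\<in>Pow {1..n}. if odd_letters w = T
             then p w * (sign (sort_sign E w) * mon (sorted_word T) x) else 0)"
      by (rule sum.cong) (auto simp: coord_word_def)
    also have "\<dots> = p w * (sign (sort_sign E w) * mon (sorted_word (odd_letters w)) x)"
      using w by (subst sum.delta') auto
    finally show "(\<Sum>T\<in>Pow {1..n}. p w * (coord_word E w T * mon (sorted_word T) x))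
        = p w * (sign (sort_sign E w) * mon (sorted_word (odd_letters w)) x)" .
  qed
  finally show "normal_form p x =
      (\<Sum>w\<in>supp p. p w * (sign (sort_sign E w) * mon (sorted_word (odd_letters w)) x))" .
qed

lemma equiv_normal_form:
  assumes p: "p \<in> free_alg n"
  shows "equiv_I p (normal_form p)"
proof -
  have f: "finite (supp p)" and r: "letters_in n p" using p by (auto simp: free_alg_iff)
  let ?red = "\<lambda>w. fa_sub (mon w) (fa_smult (sign (sort_sign E w)) (mon (sorted_word (odd_letters w))))"
  have "fa_sub p (normal_form p) = (\<lambda>x. \<Sum>w\<in>supp p. fa_smult (p w) (?red w) x)"
    unfolding normal_form_expansion[OF r]
    by (subst monomial_expansion[OF f]) (simp add: fa_sub_def fa_smult_def sum_subtractf algebra_simps)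
  moreover have "\<forall>w\<in>supp p. fa_smult (p w) (?red w) \<in> I"
    using mon_normal_form r by (auto simp: letters_in_def equiv_I_def intro!: clifford_ideal.smult)
  ultimately show ?thesis unfolding equiv_I_def using I_sum[OF f] by simp
qed

text \<open>Hence the ideal is exactly the common kernel of the coordinates.\<close>

lemma coord_zero_ideal:
  assumes p: "p \<in> free_alg n" and z: "\<And>T. coord E p T = 0"
  shows "p \<in> I"
proof -
  have "normal_form p = fa_zero" by (simp add: normal_form_def z fa_zero_def)
  then have "fa_sub p fa_zero \<in> I" using equiv_normal_form[OF p] by (simp add: equiv_I_def)
  moreover have "fa_sub p fa_zero = p" by (simp add: fa_sub_def fa_zero_def)
  ultimately show ?thesis by simp
qed

lemma ideal_iff_coord_zero:
  assumes p: "p \<in> free_alg n"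
  shows "p \<in> I \<longleftrightarrow> (\<forall>T. coord E p T = 0)"
  using ideal_coord_zero coord_zero_ideal p by metis

lemma coord_nonzero_sub:
  assumes p: "p \<in> free_alg n" and "coord E p S \<noteq> 0"
  shows "S \<subseteq> {1..n}"
proof -
  have "(\<Sum>w\<in>supp p. p w * coord_word E w S) \<noteq> 0" using assms(2) by (simp add: coord_def)
  then obtain w where w1: "w \<in> supp p" and w2: "p w * coord_word E w S \<noteq> 0"
    by (rule sum.not_neutral_contains_not_neutral)
  from w2 have "coord_word E w S \<noteq> 0" by simp
  note w = w1 this
  then have "odd_letters w = S" "set w \<subseteq> {1..n}" using w p by (auto simp: coord_word_def free_alg_iff letters_in_def split: if_splits)
  then show ?thesis using odd_letters_sub by blast
qed

text \<open>A central element only has coordinates on central sets: comparing the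
  \<open>S \<triangle> {i}\<close>-coordinates of \<open>p e_i\<close> and \<open>e_i p\<close> shows that \<open>i\<close> has an even number of
  neighbours in \<open>S\<close> whenever the \<open>S\<close>-coordinate of \<open>p\<close> is nonzero.\<close>

lemma center_coords_central:
  assumes c: "p \<in> center_preimage n E" and nz: "coord E p S \<noteq> 0"
  shows "S \<in> central_sets"
proof -
  have p: "p \<in> free_alg n" using c by (simp add: center_preimage_def)
  have Sn: "S \<subseteq> {1..n}" using coord_nonzero_sub[OF p nz] .
  have fS: "finite S" using Sn finite_subset by blast
  have "\<not> parity S (E i)" if i: "i \<in> {1..n}" for i
  proof -
    have q: "mon [i] \<in> free_alg n" using i by (intro free_alg_mon) auto
    have "fa_sub (fa_mult p (mon [i])) (fa_mult (mon [i]) p) \<in> I"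
      using c q by (auto simp: center_preimage_def)
    then have z: "coord E (fa_sub (fa_mult p (mon [i])) (fa_mult (mon [i]) p)) (symdiff S {i}) = 0"
      using ideal_coord_zero by metis
    have fin: "finite (supp (fa_mult p (mon [i])))" "finite (supp (fa_mult (mon [i]) p))"
      using free_alg_mult[OF p q] free_alg_mult[OF q p] by (auto simp: free_alg_iff)
    have "coord E (fa_mult p (mon [i])) (symdiff S {i}) = sign (sign_right E i S) * coord E p S"
      using coord_mult_right[OF p q, of "symdiff S {i}"] by (simp add: supp_mon odd_letters_Cons) (simp add: mon_def)
    moreover have "coord E (fa_mult (mon [i]) p) (symdiff S {i}) = sign (sign_left E i S) * coord E p S"
      using coord_mult_left[OF p q, of "symdiff S {i}"] by (simp add: supp_mon odd_letters_Cons) (simp add: mon_def)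
    ultimately have "sign (sign_right E i S) = sign (sign_left E i S)"
      using z nz unfolding coord_sub[OF fin] by simp
    then show ?thesis using sign_left_right[OF fS Sn i] by (simp add: sign_inj)
  qed
  then show "S \<in> central_sets" using Sn by (auto simp: central_sets_def adj_kernel_def)
qed

text \<open>Conversely, an element with coordinates only on central sets commutes with everything
  modulo \<open>I\<close>, because the left and right reordering signs agree on central sets.\<close>

lemma central_coords_center:
  assumes p: "p \<in> free_alg n" and sK: "\<And>T. coord E p T \<noteq> 0 \<Longrightarrow> T \<in> central_sets"
  shows "p \<in> center_preimage n E"
  unfolding center_preimage_def
proof (intro CollectI conjI ballI p)
  fix q assume q: "q \<in> free_alg n"
  have fa: "fa_sub (fa_mult p q) (fa_mult q p) \<in> free_alg n"
    using free_alg_mult[OF p q] free_alg_mult[OF q p] by (rule free_alg_sub)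
  have fin: "finite (supp (fa_mult p q))" "finite (supp (fa_mult q p))"
    using free_alg_mult[OF p q] free_alg_mult[OF q p] by (auto simp: free_alg_iff)
  have "coord E (fa_sub (fa_mult p q) (fa_mult q p)) T = 0" for T
  proof -
    let ?S = "\<lambda>v. symdiff T (odd_letters v)"
    have "coord E (fa_sub (fa_mult p q) (fa_mult q p)) T
        = (\<Sum>v\<in>supp q. q v * (sign (sort_sign_right E (?S v) v) - sign (sort_sign_left E v (?S v)))
                        * coord E p (?S v))"
      unfolding coord_sub[OF fin] coord_mult_right[OF p q] coord_mult_left[OF p q]
      by (simp add: sum_subtractf[symmetric] algebra_simps)
    also have "\<dots> = 0"
    proof (rule sum.neutral, rule ballI)
      fix v assume "v \<in> supp q"
      then have "set v \<subseteq> {1..n}" using q by (auto simp: free_alg_iff letters_in_def)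
      then show "q v * (sign (sort_sign_right E (?S v) v) - sign (sort_sign_left E v (?S v)))
                   * coord E p (?S v) = 0"
        using sK[of "?S v"] sort_sign_right_left by (cases "coord E p (?S v) = 0") auto
    qed
    finally show ?thesis .
  qed
  then show "fa_sub (fa_mult p q) (fa_mult q p) \<in> I" using ideal_iff_coord_zero[OF fa] by simp
qed

definition central_monomials :: "(nat list \<Rightarrow> complex) set" where "central_monomials = (\<lambda>T. mon (sorted_word T)) ` central_sets"

lemma inj_sorted_mon: "inj_on (\<lambda>T. mon (sorted_word T)) central_sets"
proof (rule inj_onI)
  fix S T assume "S \<in> central_sets" "T \<in> central_sets" "mon (sorted_word S) = mon (sorted_word T)"
  then have "sorted_word S = sorted_word T" "finite S" "finite T" using mon_inj central_sets_finite by auto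
  then show "S = T" by (metis sorted_list_of_set.set_sorted_key_list_of_set)
qed

lemma sorted_mon_free_alg: "T \<in> central_sets \<Longrightarrow> mon (sorted_word T) \<in> free_alg n"
  using central_sets_sub central_sets_finite by (intro free_alg_mon) auto

lemma sorted_mon_center:
  assumes T: "T \<in> central_sets"
  shows "mon (sorted_word T) \<in> center_preimage n E"
proof (rule central_coords_center[OF sorted_mon_free_alg[OF T]])
  fix T' assume "coord E (mon (sorted_word T)) T' \<noteq> 0"
  then show "T' \<in> central_sets"
    using T coord_sorted_word[OF central_sets_finite[OF T]] by (auto split: if_splits)
qed

lemma central_monomials_free_alg: "central_monomials \<subseteq> free_alg n" using sorted_mon_free_alg by (auto simp: central_monomials_def)

lemma coord_lincomb_central_monomials:
  "coord E (lincomb c central_monomials) T = (if T \<in> central_sets then c (mon (sorted_word T)) else 0)"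
proof -
  have "coord E (lincomb c central_monomials) T = (\<Sum>b\<in>central_monomials. c b * coord E b T)"
    unfolding lincomb_def using central_monomials_free_alg finite_central_sets by (intro coord_lincomb) (auto simp: central_monomials_def)
  also have "\<dots> = (\<Sum>S\<in>central_sets. c (mon (sorted_word S)) * coord E (mon (sorted_word S)) T)"
    unfolding central_monomials_def by (subst sum.reindex[OF inj_sorted_mon]) simp
  also have "\<dots> = (\<Sum>S\<in>central_sets. if S = T then c (mon (sorted_word S)) else 0)"
    by (rule sum.cong) (auto simp: coord_sorted_word central_sets_finite)
  also have "\<dots> = (if T \<in> central_sets then c (mon (sorted_word T)) else 0)"
    using finite_central_sets by simp
  finally show ?thesis .
qed

lemma central_monomials_basis: "center_basis n E central_monomials"
  unfolding center_basis_def
proof (intro conjI allI impI ballI)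
  show "finite central_monomials" using finite_central_sets by (simp add: central_monomials_def)
  show "central_monomials \<subseteq> center_preimage n E" using sorted_mon_center by (auto simp: central_monomials_def)
next
  fix c b assume l: "lincomb c central_monomials \<in> I" and b: "b \<in> central_monomials"
  then obtain T where T: "T \<in> central_sets" "b = mon (sorted_word T)" by (auto simp: central_monomials_def)
  have "coord E (lincomb c central_monomials) T = 0" using ideal_coord_zero[OF l] by simp
  then show "c b = 0" using T coord_lincomb_central_monomials by simp
next
  fix p assume pZ: "p \<in> center_preimage n E"
  have p: "p \<in> free_alg n" using pZ by (simp add: center_preimage_def)
  have sK: "\<forall>T. coord E p T \<noteq> 0 \<longrightarrow> T \<in> central_sets" using center_coords_central[OF pZ] by blast
  define c where "c b = coord E p (the_inv_into central_sets (\<lambda>T. mon (sorted_word T)) b)" for b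
  have fl: "lincomb c central_monomials \<in> free_alg n"
    unfolding lincomb_def using central_monomials_free_alg finite_central_sets by (intro free_alg_lincomb) (auto simp: central_monomials_def)
  have fin: "finite (supp p)" "finite (supp (lincomb c central_monomials))" using p fl by (auto simp: free_alg_iff)
  have "coord E (fa_sub p (lincomb c central_monomials)) T = 0" for T
  proof -
    have "coord E (lincomb c central_monomials) T = (if T \<in> central_sets then coord E p T else 0)"
      unfolding coord_lincomb_central_monomials c_def using the_inv_into_f_f[OF inj_sorted_mon] by simp
    then show ?thesis unfolding coord_sub[OF fin] using sK by auto
  qed
  then show "\<exists>c. fa_sub p (lincomb c central_monomials) \<in> I"
    using ideal_iff_coord_zero[OF free_alg_sub[OF p fl]] by blast
qed

end

section \<open>The dimension of the centre\<close>

text \<open>Coordinate vectors live in the complex vector space of functions \<open>nat set \<Rightarrow> complex\<close>;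
  a basis of the centre is carried injectively onto a basis of the span of the point masses
  \<open>delta_fun T\<close>, \<open>T\<close> central, so all bases have \<open>|central_sets|\<close> elements.\<close>

definition fun_scale :: "complex \<Rightarrow> (nat set \<Rightarrow> complex) \<Rightarrow> (nat set \<Rightarrow> complex)" where
  "fun_scale c f = (\<lambda>T. c * f T)"

interpretation fun_vs: vector_space fun_scale
  by unfold_locales (auto simp: fun_scale_def fun_eq_iff algebra_simps)

lemma sum_fun_apply: "(\<Sum>x\<in>A. f x) T = (\<Sum>x\<in>A. f x T)"
  by (induction A rule: infinite_finite_induct) auto

definition delta_fun :: "nat set \<Rightarrow> nat set \<Rightarrow> complex" where
  "delta_fun T = (\<lambda>T'. if T = T' then 1 else 0)"

lemma inj_delta_fun: "inj delta_fun"
proof (rule injI)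
  fix S T assume "delta_fun S = delta_fun T"
  then have "delta_fun S S = delta_fun T S" by simp
  then show "S = T" by (simp add: delta_fun_def split: if_splits)
qed

text \<open>Point masses are linearly independent: evaluate a vanishing combination at a point.\<close>

lemma delta_fun_independent: "fun_vs.independent (delta_fun ` K)"
proof
  assume "fun_vs.dependent (delta_fun ` K)"
  then obtain t u v0 where t: "finite t" "t \<subseteq> delta_fun ` K"
    and z: "(\<Sum>v\<in>t. fun_scale (u v) v) = 0" and v0: "v0 \<in> t" "u v0 \<noteq> 0"
    unfolding fun_vs.dependent_explicit by blast
  obtain T0 where T0: "v0 = delta_fun T0" using v0 t by auto
  have "(\<Sum>v\<in>t. fun_scale (u v) v) T0 = (\<Sum>v\<in>t. if v = v0 then u v else 0)"
    unfolding sum_fun_apply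
  proof (rule sum.cong[OF refl])
    fix v assume "v \<in> t"
    then obtain S where S: "v = delta_fun S" using t by auto
    have "(v = v0) = (S = T0)" using S T0 inj_delta_fun by (auto dest: injD)
    then show "fun_scale (u v) v T0 = (if v = v0 then u v else 0)"
      by (simp add: fun_scale_def delta_fun_def S)
  qed
  also have "\<dots> = u v0" using t v0 by simp
  finally show False using z v0 by simp
qed

context clifford_graph
begin

text \<open>Linear independence of a basis modulo \<open>I\<close> becomes linear independence of the
  coordinate vectors, since \<open>I\<close> is exactly the common kernel of the coordinates.\<close>

lemma lincomb_ideal_iff:
  assumes "finite B" "B \<subseteq> free_alg n"
  shows "lincomb c B \<in> I \<longleftrightarrow> (\<forall>T. (\<Sum>b\<in>B. c b * coord E b T) = 0)"
proof -
  have "lincomb c B \<in> free_alg n" unfolding lincomb_def using assms by (rule free_alg_lincomb)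
  then show ?thesis using ideal_iff_coord_zero coord_lincomb[OF assms] by (simp add: lincomb_def)
qed

lemma coord_center_basis_inj:
  assumes B: "center_basis n E B"
  shows "inj_on (coord E) B"
proof (rule inj_onI, rule ccontr)
  have fB: "finite B" and Bf: "B \<subseteq> free_alg n"
    using B by (auto simp: center_basis_def center_preimage_def)
  fix b1 b2 assume b1: "b1 \<in> B" and b2: "b2 \<in> B" and eq: "coord E b1 = coord E b2" and ne: "b1 \<noteq> b2"
  define c where "c b = (if b = b1 then 1 else 0) - (if b = b2 then 1 else (0::complex))" for b
  have "(\<Sum>b\<in>B. c b * coord E b T) = 0" for T
  proof -
    have "(\<Sum>b\<in>B. c b * coord E b T) =
          (\<Sum>b\<in>B. if b = b1 then coord E b T else 0) - (\<Sum>b\<in>B. if b = b2 then coord E b T else 0)"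
      unfolding c_def left_diff_distrib sum_subtractf
      by (intro arg_cong2[where f="(-)"] sum.cong) auto
    also have "\<dots> = 0" using fB b1 b2 eq by simp
    finally show ?thesis .
  qed
  then have "lincomb c B \<in> I" using lincomb_ideal_iff[OF fB Bf] by simp
  then have "c b1 = 0" using B b1 by (auto simp: center_basis_def)
  then show False using ne by (simp add: c_def)
qed

lemma coord_center_basis_independent:
  assumes B: "center_basis n E B"
  shows "fun_vs.independent (coord E ` B)"
proof
  have fB: "finite B" and Bf: "B \<subseteq> free_alg n"
    using B by (auto simp: center_basis_def center_preimage_def)
  assume "fun_vs.dependent (coord E ` B)"
  then obtain t u v0 where t: "finite t" "t \<subseteq> coord E ` B"
    and z: "(\<Sum>v\<in>t. fun_scale (u v) v) = 0" and v0: "v0 \<in> t" "u v0 \<noteq> 0"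
    unfolding fun_vs.dependent_explicit by blast
  define c where "c b = (if coord E b \<in> t then u (coord E b) else 0)" for b
  have "(\<Sum>b\<in>B. c b * coord E b T) = 0" for T
  proof -
    have "(\<Sum>b\<in>B. c b * coord E b T) = (\<Sum>b\<in>{b\<in>B. coord E b \<in> t}. u (coord E b) * coord E b T)"
      unfolding c_def using fB by (intro sum.mono_neutral_cong_right) auto
    also have "\<dots> = (\<Sum>v\<in>coord E ` {b\<in>B. coord E b \<in> t}. u v * v T)"
      by (subst sum.reindex) (auto intro: inj_on_subset[OF coord_center_basis_inj[OF B]])
    also have "coord E ` {b\<in>B. coord E b \<in> t} = t" using t by auto
    also have "(\<Sum>v\<in>t. u v * v T) = (\<Sum>v\<in>t. fun_scale (u v) v) T"
      by (simp add: sum_fun_apply fun_scale_def)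
    finally show ?thesis using z by simp
  qed
  then have "lincomb c B \<in> I" using lincomb_ideal_iff[OF fB Bf] by simp
  moreover have "\<And>c. lincomb c B \<in> I \<Longrightarrow> \<forall>b\<in>B. c b = 0" using B by (simp add: center_basis_def)
  moreover obtain b0 where b0: "b0 \<in> B" "v0 = coord E b0" using v0 t by auto
  ultimately have "c b0 = 0" by blast
  then show False using v0 b0 by (simp add: c_def)
qed

lemma coord_center_basis_span:
  assumes B: "center_basis n E B"
  shows "coord E ` B \<subseteq> fun_vs.span (delta_fun ` central_sets)"
proof
  fix f assume "f \<in> coord E ` B"
  then obtain b where b: "b \<in> B" "f = coord E b" by auto
  have bZ: "b \<in> center_preimage n E" using B b by (auto simp: center_basis_def)
  have "f = (\<Sum>T\<in>central_sets. fun_scale (coord E b T) (delta_fun T))"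
  proof
    fix T'
    have "(\<Sum>T\<in>central_sets. fun_scale (coord E b T) (delta_fun T)) T'
        = (\<Sum>T\<in>central_sets. if T = T' then coord E b T else 0)"
      unfolding sum_fun_apply by (rule sum.cong) (auto simp: fun_scale_def delta_fun_def)
    also have "\<dots> = f T'" using finite_central_sets center_coords_central[OF bZ] b by auto
    finally show "f T' = (\<Sum>T\<in>central_sets. fun_scale (coord E b T) (delta_fun T)) T'" by simp
  qed
  also have "\<dots> \<in> fun_vs.span (delta_fun ` central_sets)"
    by (intro fun_vs.span_sum fun_vs.span_scale fun_vs.span_base) auto
  finally show "f \<in> fun_vs.span (delta_fun ` central_sets)" .
qed

text \<open>Conversely each point mass at a central set \<open>T\<close> is the coordinate vector of the central
  element \<open>e_T\<close>, which the basis spans modulo \<open>I\<close>.\<close>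

lemma delta_central_span:
  assumes B: "center_basis n E B"
  shows "delta_fun ` central_sets \<subseteq> fun_vs.span (coord E ` B)"
proof
  have fB: "finite B" and Bf: "B \<subseteq> free_alg n"
    using B by (auto simp: center_basis_def center_preimage_def)
  fix f assume "f \<in> delta_fun ` central_sets"
  then obtain T where T: "T \<in> central_sets" "f = delta_fun T" by auto
  obtain c where c: "fa_sub (mon (sorted_word T)) (lincomb c B) \<in> I"
    using B sorted_mon_center[OF T(1)] by (auto simp: center_basis_def)
  have fl: "lincomb c B \<in> free_alg n" unfolding lincomb_def using fB Bf by (rule free_alg_lincomb)
  have fin: "finite (supp (mon (sorted_word T)))" "finite (supp (lincomb c B))"
    using fl by (auto simp: free_alg_iff supp_mon)
  have "f = (\<Sum>b\<in>B. fun_scale (c b) (coord E b))"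
  proof
    fix T'
    have "coord E (fa_sub (mon (sorted_word T)) (lincomb c B)) T' = 0"
      using ideal_coord_zero[OF c] by simp
    then have "coord E (mon (sorted_word T)) T' = coord E (lincomb c B) T'"
      unfolding coord_sub[OF fin] by simp
    then show "f T' = (\<Sum>b\<in>B. fun_scale (c b) (coord E b)) T'"
      using T coord_sorted_word[OF central_sets_finite[OF T(1)]] coord_lincomb[OF fB Bf]
      by (simp add: delta_fun_def sum_fun_apply fun_scale_def lincomb_def)
  qed
  also have "\<dots> \<in> fun_vs.span (coord E ` B)"
    by (intro fun_vs.span_sum fun_vs.span_scale fun_vs.span_base) auto
  finally show "f \<in> fun_vs.span (coord E ` B)" .
qed

text \<open>Two finite independent sets spanning each other have the same size.\<close>

lemma card_center_basis:
  assumes B: "center_basis n E B"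
  shows "card B = card central_sets"
proof -
  have fB: "finite B" using B by (simp add: center_basis_def)
  have "card (coord E ` B) \<le> card (delta_fun ` central_sets)"
    using fun_vs.independent_span_bound[OF _ coord_center_basis_independent[OF B]
        coord_center_basis_span[OF B]] finite_central_sets by simp
  moreover have "card (delta_fun ` central_sets) \<le> card (coord E ` B)"
    using fun_vs.independent_span_bound[OF _ delta_fun_independent delta_central_span[OF B]] fB
    by simp
  ultimately show ?thesis
    using card_image[OF coord_center_basis_inj[OF B]] card_image[OF inj_on_subset[OF inj_delta_fun]]
    by simp
qed

lemma center_dim_eq: "center_dim n E = card central_sets"
  unfolding center_dim_def
proof (rule the_equality)
  show "\<exists>B. center_basis n E B \<and> card B = card central_sets"
    using central_monomials_basis card_center_basis by blast
  show "\<And>d. \<exists>B. center_basis n E B \<and> card B = d \<Longrightarrow> d = card central_sets"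
    using card_center_basis by blast
qed

end

section \<open>The graphs G(k,m)\<close>

text \<open>In \<open>G(k,m)\<close> every vertex \<open>i \<le> 2k\<close> has exactly one neighbour, its partner
  \<open>partner i\<close>; so a kernel vector cannot contain any such vertex, and the kernel consists of
  the subsets of the isolated vertices \<open>{2k+1..n}\<close>.\<close>

lemma Gkm_simple: "simple_graph n (Gkm_edges k)"
  by (auto simp: simple_graph_def Gkm_edges_def)

lemma Gkm_isolated: "2 * k < t \<Longrightarrow> \<not> Gkm_edges k i t"
  by (auto simp: Gkm_edges_def)

definition partner :: "nat \<Rightarrow> nat" where
  "partner i = (if odd i then i + 1 else i - 1)"

lemma partner_partner: "1 \<le> i \<Longrightarrow> partner (partner i) = i"
  unfolding partner_def by (cases "odd i") auto

lemma div2_eq_iff: "((t::nat) + 1) div 2 = a + 1 \<longleftrightarrow> t = 2 * a + 1 \<or> t = 2 * a + 2"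
  by presburger

lemma odd_le: "odd (i::nat) \<Longrightarrow> i \<le> 2 * k \<Longrightarrow> i + 1 \<le> 2 * k"
  by presburger

lemma partner_range: "1 \<le> i \<Longrightarrow> i \<le> 2 * k \<Longrightarrow> 1 \<le> partner i \<and> partner i \<le> 2 * k"
  unfolding partner_def using odd_le[of i k] by (cases "odd i") auto

lemma Gkm_partner: "1 \<le> i \<Longrightarrow> i \<le> 2 * k \<Longrightarrow> Gkm_edges k i t \<longleftrightarrow> t = partner i"
proof -
  assume i: "1 \<le> i" "i \<le> 2 * k"
  show ?thesis
  proof (cases "odd i")
    case True
    then obtain a where a: "i = 2 * a + 1" by (auto elim: oddE)
    have d: "(i + 1) div 2 = a + 1" using a by simp
    have le: "2 * a + 2 \<le> 2 * k" using odd_le[OF True i(2)] a by simp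
    have "t = partner i \<longleftrightarrow> t = 2 * a + 2" using True a by (simp add: partner_def)
    moreover have "Gkm_edges k i t \<longleftrightarrow> t = 2 * a + 2"
      unfolding Gkm_edges_def d div2_eq_iff using i a le by auto
    ultimately show ?thesis by simp
  next
    case False
    then obtain b where b: "i = 2 * b" by (auto elim: evenE)
    then obtain a where a: "b = a + 1" using i by (cases b) auto
    have d: "(i + 1) div 2 = a + 1" using a b by simp
    have "t = partner i \<longleftrightarrow> t = 2 * a + 1" using False a b by (simp add: partner_def)
    moreover have "Gkm_edges k i t \<longleftrightarrow> t = 2 * a + 1"
      unfolding Gkm_edges_def d div2_eq_iff using i a b by auto
    ultimately show ?thesis by simp
  qed
qed

lemma adj_kernel_Gkm:
  assumes "2 * k \<le> n"
  shows "adj_kernel {1..n} (Gkm_edges k) = Pow {2*k+1..n}"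
proof
  show "adj_kernel {1..n} (Gkm_edges k) \<subseteq> Pow {2*k+1..n}"
  proof
    fix T assume T: "T \<in> adj_kernel {1..n} (Gkm_edges k)"
    have TV: "T \<subseteq> {1..n}" using T by (auto simp: adj_kernel_def)
    have "t \<in> {2*k+1..n}" if t: "t \<in> T" for t
    proof (rule ccontr)
      assume "t \<notin> {2*k+1..n}"
      then have t1: "1 \<le> t" "t \<le> 2 * k" using t TV by auto
      define i where "i = partner t"
      have i: "1 \<le> i" "i \<le> 2 * k" using partner_range[OF t1] by (auto simp: i_def)
      have "{s\<in>T. Gkm_edges k i s} = {t}"
        using Gkm_partner[OF i] partner_partner[OF t1(1)] t by (auto simp: i_def)
      then have "parity T (Gkm_edges k i)" by (simp add: parity_def)
      moreover have "i \<in> {1..n}" using i assms by auto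
      ultimately show False using T by (auto simp: adj_kernel_def)
    qed
    then show "T \<in> Pow {2*k+1..n}" by auto
  qed
next
  show "Pow {2*k+1..n} \<subseteq> adj_kernel {1..n} (Gkm_edges k)"
  proof
    fix T assume "T \<in> Pow {2*k+1..n}"
    then have T: "T \<subseteq> {2*k+1..n}" by auto
    have "\<not> parity T (Gkm_edges k i)" for i
    proof -
      have "parity T (Gkm_edges k i) = False"
        by (rule parity_false) (use T Gkm_isolated in fastforce)
      then show ?thesis by simp
    qed
    then show "T \<in> adj_kernel {1..n} (Gkm_edges k)" using T by (auto simp: adj_kernel_def)
  qed
qed

lemma center_dim_Gkm:
  assumes "2 * k \<le> n"
  shows "center_dim n (Gkm_edges k) = 2 ^ (n - 2 * k)"
proof -
  interpret G: clifford_graph n "Gkm_edges k" by unfold_locales (rule Gkm_simple)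
  have "center_dim n (Gkm_edges k) = card (adj_kernel {1..n} (Gkm_edges k))"
    using G.center_dim_eq by (simp add: G.central_sets_def)
  also have "\<dots> = 2 ^ (n - 2 * k)" by (subst adj_kernel_Gkm[OF assms]) (simp add: card_Pow)
  finally show ?thesis .
qed

lemma center_dim_pow2:
  assumes "simple_graph n E"
  shows "\<exists>r. 2 * r \<le> n \<and> center_dim n E = 2 ^ (n - 2 * r)"
proof -
  interpret clifford_graph n E using assms by unfold_locales
  have "sym_irrefl_on {1..n} E" using assms by (auto simp: sym_irrefl_on_def simple_graph_def)
  then obtain r where "2 * r \<le> n" "card (adj_kernel {1..n} E) = 2 ^ (n - 2 * r)"
    using card_adj_kernel[of "{1..n}" E] by auto
  then show ?thesis using center_dim_eq by (auto simp: central_sets_def)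
qed

text \<open>Since \<open>G(k, n-2k)\<close> has centre of dimension \<open>2^(n-2k)\<close>, it lies in the Clifford class of
  \<open>G\<close> exactly when \<open>k = r\<close>.\<close>

theorem mainTheorem3:
  fixes n :: nat and E :: "nat \<Rightarrow> nat \<Rightarrow> bool"
  assumes "n \<ge> 1" and "simple_graph n E"
  shows "\<exists>!km :: nat \<times> nat. 2 * fst km + snd km = n \<and>
           same_clifford_class n (Gkm_edges (fst km)) E"
proof -
  obtain r where r: "2 * r \<le> n" and dE: "center_dim n E = 2 ^ (n - 2 * r)"
    using center_dim_pow2[OF assms(2)] by blast
  have class_iff: "same_clifford_class n (Gkm_edges k) E \<longleftrightarrow> k = r" if k: "2 * k \<le> n" for k
  proof -
    have "same_clifford_class n (Gkm_edges k) E \<longleftrightarrow> (2::nat) ^ (n - 2 * k) = 2 ^ (n - 2 * r)"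
      using center_dim_Gkm[OF k] dE by (simp add: same_clifford_class_def)
    also have "\<dots> \<longleftrightarrow> k = r" using k r by auto
    finally show ?thesis .
  qed
  show ?thesis
  proof (rule ex1I[of _ "(r, n - 2 * r)"])
    show "2 * fst (r, n - 2 * r) + snd (r, n - 2 * r) = n \<and>
          same_clifford_class n (Gkm_edges (fst (r, n - 2 * r))) E"
      using class_iff[OF r] r by simp
  next
    fix km :: "nat \<times> nat"
    assume "2 * fst km + snd km = n \<and> same_clifford_class n (Gkm_edges (fst km)) E"
    then show "km = (r, n - 2 * r)" using class_iff[of "fst km"] by (cases km) auto
  qed
qed

end
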